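(* Let $n\ge1$, $0<s<1$, $\Omega\subset\mathbb{R}^n$ a bounded open set, $u\in L^1_{2s}(\mathbb{R}^n)\cap C(\overline\Omega)$ non-negative, and $g\in C([0,\infty))$ with $g(0)=0$. Assume $(-\Delta)^s u\ge g(u)$ in $\Omega$ in the viscosity sense. Let $u_{\mathrm{tor}}$ be a torsion function of $\Omega$. Then either $u=0$ a.e. in $\mathbb{R}^n$, or $u>0$ in $\Omega$ and $u\ge C\,u_{\mathrm{tor}}$ in $\Omega$ for some constant $C>0$.
   Context: $L^1_{2s}(\mathbb{R}^n)$ is the space of locally integrable $u$ on $\mathbb{R}^n$ with $\int_{\mathbb{R}^n}\frac{|u(x)|}{1+|x|^{n+2s}}dx<\infty$. For $u\in L^1_{2s}(\mathbb{R}^n)$ upper semicontinuous in $\Omega$ and $f:\Omega\to\mathbb{R}$, $(-\Delta)^s u\ge f$ in $\Omega$ in the viscosity sense means: for every $x\in\Omega$, every open neighbourhood $U\subset\Omega$ of $x$ and every $\phi\in C^2(U)$ with $\phi(x)=u(x)$ and $\phi<u$ in $U\setminus\{x\}$, setting $w=\phi$ in $U$, $w=u$ in $\mathbb{R}^n\setminus U$, one has $2\,\mathrm{P.V.}\int_{\mathbb{R}^n}\frac{w(x)-w(y)}{|x-y|^{n+2s}}dy\ge f(x)$; $(-\Delta)^s u\le f$ is defined symmetrically (for lower semicontinuous $u$, test functions $\phi>u$ in $U\setminus\{x\}$ touching at $x$, conclusion $\le f(x)$), and $(-\Delta)^s u=f$ means $u\in C(\Omega)$ and both hold. A torsion function of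 $\Omega$ is $u_{\mathrm{tor}}\in L^1_{2s}(\mathbb{R}^n)\cap C(\overline\Omega)$ with $u_{\mathrm{tor}}=0$ in $\mathbb{R}^n\setminus\Omega$ and $(-\Delta)^s u_{\mathrm{tor}}=1$ in $\Omega$ in the viscosity sense. *)

theory Defs
  imports "HOL-Analysis.Analysis"
begin

definition L1_2s :: "real \<Rightarrow> ('a::euclidean_space \<Rightarrow> real) \<Rightarrow> bool" where
  "L1_2s s u \<longleftrightarrow>
     (\<forall>K. compact K \<longrightarrow> set_integrable lborel K u) \<and>
     integrable lborel (\<lambda>x. u x / (1 + norm x powr (real DIM('a) + 2 * s)))"

definition C2_on :: "'a::euclidean_space set \<Rightarrow> ('a \<Rightarrow> real) \<Rightarrow> bool" where
  "C2_on U \<phi> \<longleftrightarrow>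
     (\<exists>(G :: 'a \<Rightarrow> ('a \<Rightarrow>\<^sub>L real)) (H :: 'a \<Rightarrow> ('a \<Rightarrow>\<^sub>L ('a \<Rightarrow>\<^sub>L real))).
        (\<forall>x\<in>U. (\<phi> has_derivative blinfun_apply (G x)) (at x)) \<and>
        (\<forall>x\<in>U. (G has_derivative blinfun_apply (H x)) (at x)) \<and>
        continuous_on U H)"

definition pv_trunc :: "real \<Rightarrow> ('a::euclidean_space \<Rightarrow> real) \<Rightarrow> 'a \<Rightarrow> real \<Rightarrow> ereal" where
  "pv_trunc s w x eps =
     enn2ereal (\<integral>\<^sup>+ y. ennreal (indicator {y. eps < dist x y} y *
         max 0 ((w x - w y) / dist x y powr (real DIM('a) + 2 * s))) \<partial>lborel)
   - enn2ereal (\<integral>\<^sup>+ y. ennreal (indicator {y. eps < dist x y} y *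
         max 0 ((w y - w x) / dist x y powr (real DIM('a) + 2 * s))) \<partial>lborel)"

definition frac_pv_ge :: "real \<Rightarrow> ('a::euclidean_space \<Rightarrow> real) \<Rightarrow> 'a \<Rightarrow> real \<Rightarrow> bool" where
  "frac_pv_ge s w x c \<longleftrightarrow>
     (\<exists>L. ((\<lambda>eps. 2 * pv_trunc s w x eps) \<longlongrightarrow> L) (at_right 0) \<and> ereal c \<le> L)"

definition frac_pv_le :: "real \<Rightarrow> ('a::euclidean_space \<Rightarrow> real) \<Rightarrow> 'a \<Rightarrow> real \<Rightarrow> bool" where
  "frac_pv_le s w x c \<longleftrightarrow>
     (\<exists>L. ((\<lambda>eps. 2 * pv_trunc s w x eps) \<longlongrightarrow> L) (at_right 0) \<and> L \<le> ereal c)"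

text \<open>(-Delta)^s u >= f in Omega in the viscosity sense (u upper semicontinuous in Omega).\<close>
definition visc_super :: "real \<Rightarrow> 'a::euclidean_space set \<Rightarrow> ('a \<Rightarrow> real) \<Rightarrow> ('a \<Rightarrow> real) \<Rightarrow> bool" where
  "visc_super s \<Omega> u f \<longleftrightarrow>
     L1_2s s u \<and>
     (\<forall>x\<in>\<Omega>. \<forall>e>0. \<forall>\<^sub>F y in at x within \<Omega>. u y < u x + e) \<and>
     (\<forall>x\<in>\<Omega>. \<forall>U \<phi>. open U \<and> x \<in> U \<and> U \<subseteq> \<Omega> \<and> C2_on U \<phi> \<and> \<phi> x = u x \<and>
          (\<forall>y\<in>U - {x}. \<phi> y < u y) \<longrightarrow>
          frac_pv_ge s (\<lambda>y. if y \<in> U then \<phi> y else u y) x (f x))"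

text \<open>(-Delta)^s u <= f in Omega in the viscosity sense (u lower semicontinuous in Omega).\<close>
definition visc_sub :: "real \<Rightarrow> 'a::euclidean_space set \<Rightarrow> ('a \<Rightarrow> real) \<Rightarrow> ('a \<Rightarrow> real) \<Rightarrow> bool" where
  "visc_sub s \<Omega> u f \<longleftrightarrow>
     L1_2s s u \<and>
     (\<forall>x\<in>\<Omega>. \<forall>e>0. \<forall>\<^sub>F y in at x within \<Omega>. u x - e < u y) \<and>
     (\<forall>x\<in>\<Omega>. \<forall>U \<phi>. open U \<and> x \<in> U \<and> U \<subseteq> \<Omega> \<and> C2_on U \<phi> \<and> \<phi> x = u x \<and>
          (\<forall>y\<in>U - {x}. u y < \<phi> y) \<longrightarrow>
          frac_pv_le s (\<lambda>y. if y \<in> U then \<phi> y else u y) x (f x))"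

definition visc_sol :: "real \<Rightarrow> 'a::euclidean_space set \<Rightarrow> ('a \<Rightarrow> real) \<Rightarrow> ('a \<Rightarrow> real) \<Rightarrow> bool" where
  "visc_sol s \<Omega> u f \<longleftrightarrow> continuous_on \<Omega> u \<and> visc_super s \<Omega> u f \<and> visc_sub s \<Omega> u f"

definition torsion_function :: "real \<Rightarrow> 'a::euclidean_space set \<Rightarrow> ('a \<Rightarrow> real) \<Rightarrow> bool" where
  "torsion_function s \<Omega> ut \<longleftrightarrow>
     L1_2s s ut \<and> continuous_on (closure \<Omega>) ut \<and> (\<forall>x. x \<notin> \<Omega> \<longrightarrow> ut x = 0) \<and>
     visc_sol s \<Omega> ut (\<lambda>_. 1)"

end

theory Submission
  imports Defs
begin

(*
  If u vanished at a point x0 of \<Omega>, we could touch u from below at x0 by -|y - x0|^2 on a small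
  ball. The truncated fractional Laplacian of the touched function is then at most a small error
  minus the contribution of the set where u is large, a fixed negative number; this contradicts
  g (u x0) = g 0 = 0.

  For the lower bound, suppose C ut > u somewhere for a small C > 0 and double the variables: at
  a maximum point (xh, yh) of C ut x - u y - |x - y|^2 / (2 \<delta>), ut is touched from above at xh
  and u from below at yh by quadratics. Subtracting the two viscosity inequalities, the integrals
  near the origin nearly cancel, while the set where u is large again contributes a fixed negative
  amount. Since u yh <= C ut xh is small, g (u yh) is close to 0, which is impossible for small C.
*)

section \<open>Integrals of powers of the norm\<close>

lemma borel_ball [measurable]: "ball (c::'a::metric_space) r \<in> sets borel"
  by simp

lemma emeasure_lborel_ball_scale:
  fixes c :: "'a::euclidean_space"
  assumes "0 \<le> r"
  shows "emeasure lborel (ball c r) = ennreal (r ^ DIM('a)) * emeasure lborel (ball (0::'a) 1)"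
  using emeasure_lebesgue_ball_conv_unit_ball[OF assms, of c] by (simp add: emeasure_completion)

lemma nn_integral_le_ball_series:
  fixes f :: "'a::euclidean_space \<Rightarrow> ennreal"
  assumes le: "\<And>z. f z \<le> (\<Sum>k. ennreal (c k) * indicator (ball 0 (R k)) z)"
    and c: "\<And>k. 0 \<le> c k" and R: "\<And>k. 0 \<le> R k" and sums: "(\<lambda>k. c k * R k ^ DIM('a)) sums S"
  shows "(\<integral>\<^sup>+z. f z \<partial>lborel) \<le> ennreal S * emeasure lborel (ball (0::'a) 1)"
proof -
  have "(\<integral>\<^sup>+z. f z \<partial>lborel) \<le> (\<integral>\<^sup>+z. (\<Sum>k. ennreal (c k) * indicator (ball (0::'a) (R k)) z) \<partial>lborel)"
    using le by (intro nn_integral_mono) auto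
  also have "\<dots> = (\<Sum>k. \<integral>\<^sup>+z. ennreal (c k) * indicator (ball (0::'a) (R k)) z \<partial>lborel)"
    by (rule nn_integral_suminf) measurable
  also have "\<dots> = (\<Sum>k. ennreal (c k) * emeasure lborel (ball (0::'a) (R k)))"
    by (simp add: nn_integral_cmult_indicator)
  also have "\<dots> = (\<Sum>k. ennreal (c k * R k ^ DIM('a)) * emeasure lborel (ball (0::'a) 1))"
  proof (rule suminf_cong)
    fix k
    have "ennreal (c k * R k ^ DIM('a)) = ennreal (c k) * ennreal (R k ^ DIM('a))"
      using c R by (simp add: ennreal_mult)
    then show "ennreal (c k) * emeasure lborel (ball (0::'a) (R k))
        = ennreal (c k * R k ^ DIM('a)) * emeasure lborel (ball (0::'a) 1)"
      by (simp only: emeasure_lborel_ball_scale[OF R] mult.assoc)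
  qed
  also have "\<dots> = (\<Sum>k. ennreal (c k * R k ^ DIM('a))) * emeasure lborel (ball (0::'a) 1)"
    by (rule ennreal_suminf_multc)
  also have "(\<Sum>k. ennreal (c k * R k ^ DIM('a))) = ennreal S"
    using sums c R sums_le[OF _ sums_zero sums]
    by (subst (asm) sums_ennreal[symmetric]) (auto simp: sums_iff)
  finally show ?thesis .
qed

lemma exists_dyadic_shell:
  assumes "1 \<le> (x::real)"
  obtains k :: nat where "2 ^ k \<le> x" "x < 2 ^ Suc k"
proof
  define k where "k = nat \<lfloor>log 2 x\<rfloor>"
  have "0 \<le> log 2 x" using assms by simp
  then have "real k \<le> log 2 x" "log 2 x < real k + 1"
    unfolding k_def by linarith+
  then have "2 powr real k \<le> 2 powr log 2 x" "2 powr log 2 x < 2 powr (real k + 1)"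
    by (auto intro: powr_mono)
  then show "2 ^ k \<le> x" "x < 2 ^ Suc k"
    using assms by (simp_all add: powr_realpow[symmetric] powr_add)
qed

lemma suminf_term_le_ennreal: "(f k :: ennreal) \<le> (\<Sum>j. f j)"
  using sum_le_suminf[OF summableI, of "{k}" f] by simp

lemma powr_half_power:
  "0 < (r::real) \<Longrightarrow> (r * (1/2) ^ k) powr p = r powr p * (2 powr (-p)) ^ k"
  by (simp add: powr_mult powr_power powr_realpow[symmetric] powr_powr powr_minus_divide
      power_one_over powr_divide mult.commute)

lemma ball_norm_powr_le_dyadic_series:
  fixes z :: "'a::real_normed_vector"
  assumes r: "0 < r"
  shows "ennreal (indicator (ball 0 r) z * norm z powr p)
    \<le> (\<Sum>k. ennreal (r powr p * (2 powr (-p) + 1) * (2 powr (-p)) ^ k) * indicator (ball 0 (2 * r * (1/2) ^ k)) z)"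
    (is "_ \<le> (\<Sum>k. ennreal (?c k) * indicator (ball 0 (?R k)) z)")
proof (cases "z \<in> ball 0 r \<and> z \<noteq> 0")
  case False
  then show ?thesis by (auto simp: indicator_def)
next
  case True
  define t where "t = norm z"
  have t: "0 < t" "t < r" using True by (auto simp: t_def)
  obtain k where k: "2 ^ k \<le> r / t" "r / t < 2 ^ Suc k"
    using exists_dyadic_shell[of "r / t"] t by auto
  define a where "a = r * (1/2) ^ k"
  have a: "a / 2 < t" "t \<le> a"
    using k t by (simp_all add: a_def power_one_over field_simps)
  have "t powr p \<le> a powr p + (a / 2) powr p"
  proof (cases "0 \<le> p")
    case True
    then show ?thesis using a t powr_mono2[of p t a] powr_ge_zero[of "a / 2" p] by linarith
  next
    case False
    then show ?thesis using a t powr_mono2'[of p "a / 2" t] powr_ge_zero[of a p] by linarith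
  qed
  also have "\<dots> = ?c k"
    using powr_half_power[OF r, of k p] powr_half_power[OF r, of "Suc k" p]
    by (simp add: a_def algebra_simps)
  finally have "t powr p \<le> ?c k" .
  moreover have "z \<in> ball 0 (?R k)"
    using a by (simp add: a_def t_def)
  ultimately have "ennreal (indicator (ball 0 r) z * norm z powr p) \<le> ennreal (?c k) * indicator (ball 0 (?R k)) z"
    using True by (auto simp: t_def intro!: ennreal_leI)
  also have "\<dots> \<le> (\<Sum>k. ennreal (?c k) * indicator (ball 0 (?R k)) z)"
    by (rule suminf_term_le_ennreal)
  finally show ?thesis .
qed

lemma outside_ball_norm_powr_le_dyadic_series:
  fixes z :: "'a::real_normed_vector"
  assumes e: "0 < e" and p: "p \<le> 0"
  shows "ennreal (indicator {z. e < norm z} z * norm z powr p)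
    \<le> (\<Sum>k. ennreal (e powr p * (2 powr p) ^ k) * indicator (ball 0 (4 * e * 2 ^ k)) z)"
    (is "_ \<le> (\<Sum>k. ennreal (?c k) * indicator (ball 0 (?R k)) z)")
proof (cases "e < norm z")
  case False
  then show ?thesis by (auto simp: indicator_def)
next
  case True
  define t where "t = norm z"
  have t: "e < t" using True by (auto simp: t_def)
  obtain k where k: "2 ^ k \<le> t / e" "t / e < 2 ^ Suc k"
    using exists_dyadic_shell[of "t / e"] t e by auto
  define a where "a = e * 2 ^ k"
  have a: "0 < a" "a \<le> t" "t < 2 * a"
    using k e by (simp_all add: a_def field_simps)
  have "t powr p \<le> a powr p"
    using a p by (intro powr_mono2') auto
  also have "a powr p = ?c k"
    using e by (simp add: a_def powr_mult powr_power powr_realpow[symmetric] powr_powr_swap)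
  finally have "t powr p \<le> ?c k" .
  moreover have "z \<in> ball 0 (?R k)"
    using a by (simp add: a_def t_def)
  ultimately have "ennreal (indicator {z. e < norm z} z * norm z powr p) \<le> ennreal (?c k) * indicator (ball 0 (?R k)) z"
    using True by (auto simp: t_def intro!: ennreal_leI)
  also have "\<dots> \<le> (\<Sum>k. ennreal (?c k) * indicator (ball 0 (?R k)) z)"
    by (rule suminf_term_le_ennreal)
  finally show ?thesis .
qed

lemma nn_integral_ball_norm_powr_le:
  fixes p :: real
  assumes p: "- real DIM('a) < p"
  obtains K where "\<And>r. 0 < r \<Longrightarrow>
    (\<integral>\<^sup>+z. ennreal (indicator (ball (0::'a::euclidean_space) r) z * norm z powr p) \<partial>lborel)
      \<le> ennreal (r powr (real DIM('a) + p) * K)"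
proof -
  define n where "n = DIM('a)"
  define q where "q = 2 powr (-(real n + p))"
  define K where "K = (2 powr (-p) + 1) * 2 ^ n / (1 - q)"
  obtain V where V: "emeasure lborel (ball (0::'a) 1) = ennreal V" "0 \<le> V"
    using emeasure_lborel_ball_finite[of "0::'a" 1] by (cases "emeasure lborel (ball (0::'a) 1)") auto
  have q: "0 < q" "q < 1" unfolding q_def using p by (auto simp: n_def powr_less_one)
  have "(\<integral>\<^sup>+z. ennreal (indicator (ball (0::'a) r) z * norm z powr p) \<partial>lborel)
      \<le> ennreal (r powr (real DIM('a) + p) * (K * V))" if r: "0 < r" for r
  proof -
    have "(1/2::real) ^ n = 2 powr (- real n)"
      by (simp add: powr_minus_divide powr_realpow power_one_over)
    then have "2 powr (-p) * (1/2) ^ n = q"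
      by (simp add: q_def powr_add[symmetric] add.commute)
    then have "(2 powr (-p)) ^ k * ((1/2) ^ n) ^ k = q ^ k" for k
      by (simp flip: power_mult_distrib)
    moreover have "r powr p * r ^ n = r powr (real n + p)"
      using r by (simp add: powr_add powr_realpow)
    ultimately have geometric: "r powr p * (2 powr (-p) + 1) * (2 powr (-p)) ^ k * (2 * r * (1/2) ^ k) ^ n
        = r powr (real n + p) * (2 powr (-p) + 1) * 2 ^ n * q ^ k" for k
      by (simp add: power_mult_distrib flip: power_mult) (simp add: algebra_simps)
    have "(\<lambda>k. r powr p * (2 powr (-p) + 1) * (2 powr (-p)) ^ k * (2 * r * (1/2) ^ k) ^ n)
        sums (r powr (real n + p) * (2 powr (-p) + 1) * 2 ^ n * (1 / (1 - q)))"
      unfolding geometric using q by (intro sums_mult geometric_sums) auto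
    then have "(\<lambda>k. r powr p * (2 powr (-p) + 1) * (2 powr (-p)) ^ k * (2 * r * (1/2) ^ k) ^ n)
        sums (r powr (real n + p) * K)"
      by (simp add: K_def mult.assoc)
    from nn_integral_le_ball_series[OF ball_norm_powr_le_dyadic_series[OF r] _ _ this[unfolded n_def]]
    have "(\<integral>\<^sup>+z. ennreal (indicator (ball (0::'a) r) z * norm z powr p) \<partial>lborel)
        \<le> ennreal (r powr (real n + p) * K) * ennreal V"
      using r V(1) by (simp add: n_def)
    also have "\<dots> = ennreal (r powr (real DIM('a) + p) * (K * V))"
      using q by (subst ennreal_mult[symmetric]) (use r V in \<open>auto simp: n_def K_def mult.assoc\<close>)
    finally show ?thesis .
  qed
  then show ?thesis
    using that by blast
qed

lemma nn_integral_outside_ball_norm_powr_finite: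
  fixes p :: real
  assumes p: "p < - real DIM('a)" and e: "0 < e"
  shows "(\<integral>\<^sup>+z. ennreal (indicator {z::'a::euclidean_space. e < norm z} z * norm z powr p) \<partial>lborel) < \<infinity>"
proof -
  define n where "n = DIM('a)"
  define q where "q = 2 powr (p + real n)"
  have q: "0 < q" "q < 1" unfolding q_def using p by (auto simp: n_def powr_less_one)
  have "2 powr p * 2 ^ n = q"
    by (simp add: q_def powr_add powr_realpow)
  then have "(2 powr p) ^ k * (2 ^ n) ^ k = q ^ k" for k
    by (simp flip: power_mult_distrib)
  then have geometric: "e powr p * (2 powr p) ^ k * (4 * e * 2 ^ k) ^ n = e powr p * (4 * e) ^ n * q ^ k" for k
    by (simp add: power_mult_distrib flip: power_mult) (simp add: algebra_simps)
  have "(\<lambda>k. e powr p * (2 powr p) ^ k * (4 * e * 2 ^ k) ^ n) sums (e powr p * (4 * e) ^ n * (1 / (1 - q)))"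
    unfolding geometric using q by (intro sums_mult geometric_sums) auto
  from nn_integral_le_ball_series[OF outside_ball_norm_powr_le_dyadic_series[OF e] _ _ this[unfolded n_def]]
  have "(\<integral>\<^sup>+z. ennreal (indicator {z::'a. e < norm z} z * norm z powr p) \<partial>lborel)
      \<le> ennreal (e powr p * (4 * e) ^ n * (1 / (1 - q))) * emeasure lborel (ball (0::'a) 1)"
    using p e by (simp add: n_def)
  also have "\<dots> < \<infinity>"
    using emeasure_lborel_ball_finite[of "0::'a" 1] by (simp add: ennreal_mult_less_top)
  finally show ?thesis .
qed

lemma tendsto_emeasure_ball_at_right_0:
  "((\<lambda>r. emeasure lborel (ball (c::'a::euclidean_space) r)) \<longlongrightarrow> 0) (at_right 0)"
proof -
  have "((\<lambda>r. ennreal (r ^ DIM('a))) \<longlongrightarrow> ennreal (0 ^ DIM('a))) (at_right 0)"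
    by (intro tendsto_ennrealI tendsto_intros)
  moreover have "(0::real) ^ DIM('a) = 0"
    by (simp add: power_0_left)
  ultimately have "((\<lambda>r. ennreal (r ^ DIM('a))) \<longlongrightarrow> 0) (at_right 0)"
    by simp
  moreover have "emeasure lborel (ball (0::'a) 1) < top"
    using emeasure_lborel_ball_finite by simp
  ultimately have "((\<lambda>r. emeasure lborel (ball (0::'a) 1) * ennreal (r ^ DIM('a))) \<longlongrightarrow> 0) (at_right 0)"
    using ennreal_tendsto_cmult by fastforce
  moreover have "\<forall>\<^sub>F r in at_right 0.
      emeasure lborel (ball (0::'a) 1) * ennreal (r ^ DIM('a)) = emeasure lborel (ball c r)"
    using eventually_at_right_less[of 0]
    by (rule eventually_mono) (metis emeasure_lborel_ball_scale less_imp_le mult.commute)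
  ultimately show ?thesis
    by (rule Lim_transform_eventually)
qed

lemma tendsto_nn_integral_ball_norm_powr:
  fixes p :: real
  assumes p: "- real DIM('a) < p"
  shows "((\<lambda>r. \<integral>\<^sup>+z. ennreal (indicator (ball (0::'a::euclidean_space) r) z * norm z powr p) \<partial>lborel)
    \<longlongrightarrow> 0) (at_right 0)"
proof -
  obtain K where K: "\<And>r. 0 < r \<Longrightarrow>
      (\<integral>\<^sup>+z. ennreal (indicator (ball (0::'a) r) z * norm z powr p) \<partial>lborel)
        \<le> ennreal (r powr (real DIM('a) + p) * K)"
    using nn_integral_ball_norm_powr_le[OF p] by blast
  have "((\<lambda>r. r powr (real DIM('a) + p) * K) \<longlongrightarrow> 0 * K) (at_right 0)"
    using p by (intro tendsto_intros tendsto_zero_powrI[of _ _ _ "real DIM('a) + p"])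
      (auto simp: eventually_at_right_field intro!: tendsto_ident_at exI[of _ 1])
  then have lim: "((\<lambda>r. ennreal (r powr (real DIM('a) + p) * K)) \<longlongrightarrow> 0) (at_right 0)"
    using tendsto_ennrealI by fastforce
  have bound: "\<forall>\<^sub>F r in at_right 0.
      (\<integral>\<^sup>+z. ennreal (indicator (ball (0::'a) r) z * norm z powr p) \<partial>lborel)
        \<le> ennreal (r powr (real DIM('a) + p) * K)"
    using K by (auto simp: eventually_at_right_field intro!: exI[of _ 1])
  show ?thesis
    by (rule tendsto_sandwich[OF _ bound tendsto_const lim]) simp
qed

lemma borel_measurable_L1_2s:
  assumes "L1_2s s u"
  shows "u \<in> borel_measurable borel"
proof -
  define \<rho> where "\<rho> x = 1 + norm x powr (real DIM('a) + 2 * s)" for x :: 'a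
  have "(\<lambda>x. u x / \<rho> x) \<in> borel_measurable borel"
    using assms borel_measurable_integrable unfolding L1_2s_def \<rho>_def by fastforce
  moreover have "\<rho> \<in> borel_measurable borel"
    unfolding \<rho>_def by measurable
  ultimately have "(\<lambda>x. u x / \<rho> x * \<rho> x) \<in> borel_measurable borel"
    by measurable
  moreover have "0 < \<rho> x" for x
    unfolding \<rho>_def by (simp add: add_pos_nonneg)
  ultimately show ?thesis
    by (simp add: less_imp_neq[symmetric])
qed

lemma nn_integral_lborel_translate:
  fixes f :: "'a::euclidean_space \<Rightarrow> ennreal"
  assumes "f \<in> borel_measurable borel"
  shows "(\<integral>\<^sup>+z. f (a + z) \<partial>lborel) = (\<integral>\<^sup>+y. f y \<partial>lborel)"
  using assms by (subst lborel_distr_plus[of a, symmetric]) (simp add: nn_integral_distr)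

lemma emeasure_Diff_ge:
  assumes "A \<in> sets M" "B \<in> sets M" "emeasure M A = ennreal a" "emeasure M B \<le> ennreal b" "0 \<le> b"
  shows "ennreal (a - b) \<le> emeasure M (A - B)"
proof -
  have "emeasure M A \<le> emeasure M (A - B) + emeasure M B"
    using assms(1,2) emeasure_subadditive[of "A - B" M B] emeasure_mono[of A "(A - B) \<union> B" M]
    by (auto simp: Un_absorb2)
  also have "\<dots> \<le> emeasure M (A - B) + ennreal b"
    using assms(4) by (rule add_left_mono)
  finally show ?thesis
    using assms(3,5) by (simp add: ennreal_minus[symmetric] ennreal_minus_le_iff add.commute)
qed

lemma not_AE_zero_superlevel_set:
  fixes u :: "'a::euclidean_space \<Rightarrow> real"
  assumes u: "u \<in> borel_measurable borel" "\<And>x. 0 \<le> u x"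
    and not_zero: "\<not> (AE x in lborel. u x = 0)" and "bounded S"
  obtains A m a D where "A \<in> sets borel" "0 < m" "\<And>y. y \<in> A \<Longrightarrow> m \<le> u y"
    "emeasure lborel A = ennreal a" "0 < a" "0 < D" "\<And>x. x \<in> S \<Longrightarrow> A \<subseteq> ball x D"
proof -
  define A where "A k = {y. 1 / real (Suc k) \<le> u y} \<inter> ball 0 (real (Suc k))" for k
  have A_sets: "A k \<in> sets borel" for k
    unfolding A_def using u by measurable
  have "{y. u y \<noteq> 0} \<subseteq> (\<Union>k. A k)"
  proof
    fix y assume "y \<in> {y. u y \<noteq> 0}"
    then have "0 < u y"
      using u(2)[of y] by simp
    moreover obtain k :: nat where "max (1 / u y) (norm y) < real k"
      using reals_Archimedean2 by blast
    ultimately show "y \<in> (\<Union>k. A k)"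
      by (auto simp: A_def field_simps intro!: exI[of _ k])
  qed
  then obtain k where k: "emeasure lborel (A k) \<noteq> 0"
    using not_zero AE_I'[of "\<Union>k. A k" lborel "\<lambda>x. u x = 0"] null_sets_UN[of A lborel]
    by (force simp: null_sets_def A_sets)
  have "emeasure lborel (A k) \<le> emeasure lborel (ball (0::'a) (real (Suc k)))"
    by (rule emeasure_mono) (auto simp: A_def)
  then have "emeasure lborel (A k) < \<infinity>"
    using emeasure_lborel_ball_finite[of "0::'a" "real (Suc k)"] by order
  then obtain a where "emeasure lborel (A k) = ennreal a" "0 \<le> a"
    by (cases "emeasure lborel (A k)") auto
  moreover obtain R where "0 < R" and R: "S \<subseteq> ball 0 R"
    using bounded_subset_ballD[OF \<open>bounded S\<close>] by blast
  moreover have "A k \<subseteq> ball x (real (Suc k) + R)" if "x \<in> S" for x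
  proof
    fix y assume "y \<in> A k"
    then have "norm y < real (Suc k)" "norm x < R"
      using R that by (auto simp: A_def)
    then show "y \<in> ball x (real (Suc k) + R)"
      using norm_triangle_ineq4[of x y] by (simp add: dist_norm)
  qed
  ultimately show ?thesis
    using k A_sets by (intro that[of "A k" "1 / real (Suc k)" a "real (Suc k) + R"]) (auto simp: A_def)
qed

lemma C2_on_quadratic:
  fixes p q :: "'a::euclidean_space"
  shows "C2_on U (\<lambda>y. a + b * (norm (y - p))\<^sup>2 + c * (norm (y - q))\<^sup>2)"
proof -
  define v where "v x = (2 * b) *\<^sub>R (x - p) + (2 * c) *\<^sub>R (x - q)" for x
  define G where "G x = blinfun_inner_left (v x)" for x
  define Hf where "Hf h = blinfun_inner_left ((2 * b + 2 * c) *\<^sub>R h)" for h :: 'a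
  have Hf: "bounded_linear Hf"
    unfolding Hf_def
    by (rule bounded_linear_compose[OF bounded_linear_blinfun_inner_left bounded_linear_scaleR_right])
  have "((\<lambda>y. a + b * (norm (y - p))\<^sup>2 + c * (norm (y - q))\<^sup>2) has_derivative blinfun_apply (G x)) (at x)" for x
  proof -
    have "((\<lambda>y. a + b * ((y - p) \<bullet> (y - p)) + c * ((y - q) \<bullet> (y - q))) has_derivative
        (\<lambda>h. b * (h \<bullet> (x - p) + (x - p) \<bullet> h) + c * (h \<bullet> (x - q) + (x - q) \<bullet> h))) (at x)"
      by (auto intro!: derivative_eq_intros ext simp: add.commute)
    moreover have "(\<lambda>h. b * (h \<bullet> (x - p) + (x - p) \<bullet> h) + c * (h \<bullet> (x - q) + (x - q) \<bullet> h)) = blinfun_apply (G x)"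
      by (rule ext) (simp add: G_def v_def inner_commute inner_simps algebra_simps)
    ultimately show ?thesis
      by (simp add: power2_norm_eq_inner)
  qed
  moreover have "(G has_derivative blinfun_apply (Blinfun Hf)) (at x)" for x
  proof -
    have "(v has_derivative (\<lambda>h. (2 * b + 2 * c) *\<^sub>R h)) (at x)"
      unfolding v_def by (auto intro!: derivative_eq_intros simp: algebra_simps scaleR_add_left)
    then show ?thesis
      unfolding G_def[abs_def] bounded_linear_Blinfun_apply[OF Hf] Hf_def
      by (rule bounded_linear.has_derivative[OF bounded_linear_blinfun_inner_left])
  qed
  ultimately show ?thesis
    unfolding C2_on_def by (intro exI[of _ G] exI[of _ "\<lambda>_. Blinfun Hf"]) simp
qed

section \<open>Truncated fractional Laplacians\<close>

definition pv_trunc_pos :: "real \<Rightarrow> ('a::euclidean_space \<Rightarrow> real) \<Rightarrow> 'a \<Rightarrow> real \<Rightarrow> ennreal" where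
  "pv_trunc_pos s w x eps = (\<integral>\<^sup>+z. ennreal (indicator {z. eps < norm z} z *
     max 0 ((w x - w (x + z)) / norm z powr (real DIM('a) + 2 * s))) \<partial>lborel)"

lemma pv_trunc_eq_pos_diff:
  assumes [measurable]: "w \<in> borel_measurable borel"
  shows "pv_trunc s w x eps = enn2ereal (pv_trunc_pos s w x eps) - enn2ereal (pv_trunc_pos s (\<lambda>y. - w y) x eps)"
proof -
  have "(\<integral>\<^sup>+y. ennreal (indicator {y. eps < dist x y} y * max 0 ((v x - v y) / dist x y powr (real DIM('a) + 2 * s))) \<partial>lborel)
      = pv_trunc_pos s v x eps" if [measurable]: "v \<in> borel_measurable borel" for v :: "'a \<Rightarrow> real"
    unfolding pv_trunc_pos_def
    by (subst nn_integral_lborel_translate[of _ x, symmetric]) (simp_all add: dist_norm indicator_def)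
  from this[of w] this[of "\<lambda>y. - w y"] show ?thesis
    unfolding pv_trunc_def by simp
qed

lemma pv_trunc_pos_finite:
  assumes "0 < s" "0 < eps" and [measurable]: "w \<in> borel_measurable borel" and B: "\<And>y. w x - w y \<le> B"
  shows "pv_trunc_pos s w x eps < \<infinity>"
proof -
  define \<beta> where "\<beta> = real DIM('a) + 2 * s"
  have "pv_trunc_pos s w x eps
      \<le> (\<integral>\<^sup>+z. ennreal (max B 0) * ennreal (indicator {z::'a. eps < norm z} z * norm z powr (- \<beta>)) \<partial>lborel)"
    unfolding pv_trunc_pos_def \<beta>_def[symmetric]
  proof (rule nn_integral_mono)
    fix z :: 'a
    have "max 0 ((w x - w (x + z)) / norm z powr \<beta>) \<le> max B 0 * norm z powr (- \<beta>)"
      using B[of "x + z"] by (auto simp: powr_minus_divide intro!: divide_right_mono)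
    then show "ennreal (indicator {z. eps < norm z} z * max 0 ((w x - w (x + z)) / norm z powr \<beta>))
        \<le> ennreal (max B 0) * ennreal (indicator {z. eps < norm z} z * norm z powr (- \<beta>))"
      by (auto simp: indicator_def ennreal_mult[symmetric] intro!: ennreal_leI)
  qed
  also have "\<dots> = ennreal (max B 0) * (\<integral>\<^sup>+z. ennreal (indicator {z::'a. eps < norm z} z * norm z powr (- \<beta>)) \<partial>lborel)"
    by (rule nn_integral_cmult) measurable
  also have "\<dots> < \<infinity>"
    using nn_integral_outside_ball_norm_powr_finite[where 'a='a, of "- \<beta>" eps] assms(1,2)
    by (simp add: \<beta>_def ennreal_mult_less_top)
  finally show ?thesis .
qed

lemma ereal_diff_le_of_ennreal_balance:
  fixes P1 N1 P2 N2 G L :: ennreal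
  assumes C: "0 \<le> C" and P: "P1 < \<infinity>" "P2 < \<infinity>"
    and L: "L \<le> ennreal l" "0 \<le> l" and G: "ennreal g \<le> G" "0 \<le> g"
    and balance: "P2 + ennreal C * N1 + G \<le> ennreal C * P1 + N2 + L"
  shows "2 * (enn2ereal P2 - enn2ereal N2)
    \<le> ereal C * (2 * (enn2ereal P1 - enn2ereal N1)) + ereal (2 * (l - g))"
proof (cases "N2 = \<infinity>")
  case True
  then show ?thesis
    using P(2) by (cases P2) auto
next
  case False
  obtain p1 p2 n2 where p: "P1 = ennreal p1" "P2 = ennreal p2" "N2 = ennreal n2" "0 \<le> p1" "0 \<le> p2" "0 \<le> n2"
    using P False by (cases P1; cases P2; cases N2) auto
  obtain l' where l': "L = ennreal l'" "0 \<le> l'" "l' \<le> l"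
    using L by (cases L) (auto simp: ennreal_le_iff2 top_unique)
  have rhs: "ennreal C * P1 + N2 + L = ennreal (C * p1 + n2 + l')"
    using p l' C by (simp add: ennreal_plus ennreal_mult)
  have bal: "P2 + (ennreal C * N1 + G) \<le> ennreal (C * p1 + n2 + l')"
    using balance rhs by (simp add: add.assoc)
  have CN1: "ennreal C * N1 \<le> ennreal (C * p1 + n2 + l')"
    by (rule order_trans[OF add_increasing[OF zero_le add_increasing2[OF zero_le order_refl]] bal])
  have "G \<le> ennreal (C * p1 + n2 + l')"
    by (rule order_trans[OF add_increasing[OF zero_le add_increasing[OF zero_le order_refl]] bal])
  then obtain g' where g': "G = ennreal g'" "g \<le> g'"
    using G by (cases G) (auto simp: ennreal_le_iff2 top_unique)
  \<comment> \<open>For \<open>C = 0\<close> the integral \<open>N1\<close> may be infinite, but then \<open>ereal 0 * (- \<infinity>) = 0\<close>.\<close>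
  show ?thesis
  proof (cases "C = 0")
    case True
    then have "p2 + g' \<le> n2 + l'"
      using balance p l' g' G by (simp add: ennreal_plus[symmetric] del: ennreal_plus)
    then show ?thesis
      using True p l' g' by (simp add: zero_ereal_def[symmetric])
  next
    case False
    then obtain n1 where n1: "N1 = ennreal n1" "0 \<le> n1"
      using CN1 C by (cases N1) (auto simp: ennreal_mult_top top_unique)
    have "ennreal (p2 + C * n1 + g') \<le> ennreal (C * p1 + n2 + l')"
      using balance rhs p n1 g' G C by (simp add: ennreal_plus ennreal_mult)
    then have "p2 + C * n1 + g' \<le> C * p1 + n2 + l'"
      using C p l' by (subst (asm) ennreal_le_iff) auto
    then show ?thesis
      using p n1 l' g' by (simp add: algebra_simps)
  qed
qed

lemma pv_trunc_pos_balance: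
  fixes w1 w2 g l :: "'a::euclidean_space \<Rightarrow> real"
  assumes C: "0 \<le> C" and eps: "0 < eps"
    and [measurable]: "w1 \<in> borel_measurable borel" "w2 \<in> borel_measurable borel"
      "g \<in> borel_measurable borel" "l \<in> borel_measurable borel"
    and nonneg: "\<And>z. 0 \<le> g z" "\<And>z. 0 \<le> l z"
    and inner: "\<And>z. norm z \<le> eps \<Longrightarrow> g z = 0"
    and outer: "\<And>z. eps < norm z \<Longrightarrow>
      g z - l z \<le> (C * (w1 x - w1 (x + z)) - (w2 y - w2 (y + z))) / norm z powr (real DIM('a) + 2 * s)"
  shows "pv_trunc_pos s w2 y eps + ennreal C * pv_trunc_pos s (\<lambda>v. - w1 v) x eps + (\<integral>\<^sup>+z. g z \<partial>lborel)
    \<le> ennreal C * pv_trunc_pos s w1 x eps + pv_trunc_pos s (\<lambda>v. - w2 v) y eps + (\<integral>\<^sup>+z. l z \<partial>lborel)"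
proof -
  define \<beta> where "\<beta> = real DIM('a) + 2 * s"
  define F where "F w v z = ennreal (indicator {z. eps < norm z} z * max 0 ((w v - w (v + z)) / norm z powr \<beta>))"
    for w :: "'a \<Rightarrow> real" and v z
  have F_int: "pv_trunc_pos s w v eps = (\<integral>\<^sup>+z. F w v z \<partial>lborel)" for w v
    by (simp add: pv_trunc_pos_def F_def \<beta>_def)
  have [measurable]: "F w v \<in> borel_measurable borel" if [measurable]: "w \<in> borel_measurable borel" for w v
    unfolding F_def by measurable
  have pointwise: "F w2 y z + ennreal C * F (\<lambda>v. - w1 v) x z + ennreal (g z)
      \<le> ennreal C * F w1 x z + F (\<lambda>v. - w2 v) y z + ennreal (l z)" for z
  proof (cases "eps < norm z")
    case False
    then show ?thesis
      using inner[of z] by (simp add: F_def)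
  next
    case True
    define k where "k = norm z powr \<beta>"
    define f1 where "f1 = w1 x - w1 (x + z)"
    define f2 where "f2 = w2 y - w2 (y + z)"
    have "0 < norm z"
      using True eps by linarith
    then have k: "0 < k"
      by (simp add: k_def)
    have "(C * f1 - f2) / k = C * (f1 / k) - f2 / k"
      by (simp add: diff_divide_distrib)
    then have "g z - l z \<le> C * (f1 / k) - f2 / k"
      using outer[OF True] by (simp add: f1_def f2_def k_def \<beta>_def)
    then have "max 0 (f2 / k) + C * max 0 (- f1 / k) + g z \<le> C * max 0 (f1 / k) + max 0 (- f2 / k) + l z"
      using C by (auto simp: max_def algebra_simps mult_le_0_iff)
    moreover have "F w2 y z = ennreal (max 0 (f2 / k))" "F (\<lambda>v. - w1 v) x z = ennreal (max 0 (- f1 / k))"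
      "F w1 x z = ennreal (max 0 (f1 / k))" "F (\<lambda>v. - w2 v) y z = ennreal (max 0 (- f2 / k))"
      using True by (simp_all add: F_def f1_def f2_def k_def)
    ultimately show ?thesis
      using C nonneg[of z] by (simp add: ennreal_plus[symmetric] ennreal_mult[symmetric] del: ennreal_plus)
  qed
  have "(\<integral>\<^sup>+z. F w2 y z + ennreal C * F (\<lambda>v. - w1 v) x z + ennreal (g z) \<partial>lborel)
      \<le> (\<integral>\<^sup>+z. ennreal C * F w1 x z + F (\<lambda>v. - w2 v) y z + ennreal (l z) \<partial>lborel)"
    by (rule nn_integral_mono) (rule pointwise)
  then show ?thesis
    unfolding F_int by (simp add: nn_integral_add nn_integral_cmult)
qed

lemma nn_integral_indicator_translate:
  fixes y :: "'a::euclidean_space"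
  assumes "S \<in> sets borel" "0 \<le> c"
  shows "(\<integral>\<^sup>+z. ennreal (c * indicator S (y + z)) \<partial>lborel) = ennreal c * emeasure lborel S"
proof -
  have [measurable]: "S \<in> sets borel"
    by (rule assms(1))
  have "(\<integral>\<^sup>+z. ennreal (c * indicator S (y + z)) \<partial>lborel) = (\<integral>\<^sup>+v. ennreal (c * indicator S v) \<partial>lborel)"
    by (rule nn_integral_lborel_translate) measurable
  also have "\<dots> = (\<integral>\<^sup>+v. ennreal c * indicator S v \<partial>lborel)"
    using assms(2) by (intro nn_integral_cong) (simp add: indicator_def)
  finally show ?thesis
    using assms(1) by (simp add: nn_integral_cmult_indicator)
qed

lemma kernel_lower_bound:
  fixes y z :: "'a::real_normed_vector"
  assumes z: "0 < norm z" and "0 < \<beta>"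
    and near: "norm z < r \<Longrightarrow> - \<Lambda> * (norm z)\<^sup>2 \<le> d"
    and far: "r \<le> norm z \<Longrightarrow> m * indicator A (y + z) \<le> d"
    and A: "A \<subseteq> ball y D" and "0 \<le> m"
  shows "m / D powr \<beta> * indicator (A - ball y r) (y + z) - \<Lambda> * (indicator (ball 0 r) z * norm z powr (2 - \<beta>))
    \<le> d / norm z powr \<beta>"
proof (cases "norm z < r")
  case True
  have "norm z powr (2 - \<beta>) = (norm z)\<^sup>2 / norm z powr \<beta>"
    using z by (simp add: powr_diff powr_numeral)
  then have "- \<Lambda> * (indicator (ball 0 r) z * norm z powr (2 - \<beta>)) = - \<Lambda> * (norm z)\<^sup>2 / norm z powr \<beta>"
    using True by simp
  also have "\<dots> \<le> d / norm z powr \<beta>"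
    by (rule divide_right_mono[OF near[OF True]]) simp
  finally show ?thesis
    using True by (simp add: dist_norm)
next
  case False
  have "m / D powr \<beta> * indicator A (y + z) \<le> m * indicator A (y + z) / norm z powr \<beta>"
  proof (cases "y + z \<in> A")
    case True
    then have "norm z < D"
      using A by (auto simp: dist_norm)
    then have "norm z powr \<beta> \<le> D powr \<beta>" "0 < norm z powr \<beta>" "0 < D powr \<beta>"
      using z \<open>0 < \<beta>\<close> by (auto intro!: powr_mono2)
    then have "m / D powr \<beta> \<le> m / norm z powr \<beta>"
      using \<open>0 \<le> m\<close> by (intro divide_left_mono) auto
    then show ?thesis
      using True by simp
  qed simp
  also have "\<dots> \<le> d / norm z powr \<beta>"
    using False by (intro divide_right_mono far) auto
  finally show ?thesis
    using False by (cases "y + z \<in> A") (simp_all add: dist_norm)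
qed

text \<open>The common estimate behind the strong minimum principle (with \<open>C = 0\<close>) and the
  comparison with the torsion function.\<close>

lemma pv_trunc_comparison:
  fixes w1 w2 :: "'a::euclidean_space \<Rightarrow> real"
  assumes s: "0 < s" and eps: "0 < eps" "eps < r" and C: "0 \<le> C"
    and w [measurable]: "w1 \<in> borel_measurable borel" "w2 \<in> borel_measurable borel"
    and bounded: "\<And>v. w1 x - w1 v \<le> B1" "\<And>v. w2 y - w2 v \<le> B2"
    and near: "\<And>z. norm z < r \<Longrightarrow> - \<Lambda> * (norm z)\<^sup>2 \<le> C * (w1 x - w1 (x + z)) - (w2 y - w2 (y + z))"
    and far: "\<And>z. r \<le> norm z \<Longrightarrow> m * indicator A (y + z) \<le> C * (w1 x - w1 (x + z)) - (w2 y - w2 (y + z))"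
    and A [measurable]: "A \<in> sets borel" and A_ball: "A \<subseteq> ball y D"
    and A_mass: "ennreal a \<le> emeasure lborel (A - ball y r)"
    and near_mass: "ennreal \<Lambda> * (\<integral>\<^sup>+z. ennreal (indicator (ball (0::'a) r) z * norm z powr (2 - (real DIM('a) + 2 * s))) \<partial>lborel)
      \<le> ennreal l"
    and nonneg: "0 \<le> \<Lambda>" "0 \<le> m" "0 \<le> a" "0 \<le> l" "0 < D"
  shows "2 * pv_trunc s w2 y eps
    \<le> ereal C * (2 * pv_trunc s w1 x eps) + ereal (2 * (l - m / D powr (real DIM('a) + 2 * s) * a))"
proof -
  define \<beta> where "\<beta> = real DIM('a) + 2 * s"
  define g where "g z = m / D powr \<beta> * indicator (A - ball y r) (y + z)" for z
  define h where "h z = \<Lambda> * (indicator (ball 0 r) z * norm z powr (2 - \<beta>))" for z :: 'a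
  have [measurable]: "g \<in> borel_measurable borel" "h \<in> borel_measurable borel"
    unfolding g_def h_def by measurable
  have outer: "g z - h z \<le> (C * (w1 x - w1 (x + z)) - (w2 y - w2 (y + z))) / norm z powr \<beta>"
    if "eps < norm z" for z
    unfolding g_def h_def
    by (rule kernel_lower_bound[OF _ _ near far A_ball]) (use that eps s nonneg in \<open>auto simp: \<beta>_def\<close>)
  have balance: "pv_trunc_pos s w2 y eps + ennreal C * pv_trunc_pos s (\<lambda>v. - w1 v) x eps + (\<integral>\<^sup>+z. g z \<partial>lborel)
      \<le> ennreal C * pv_trunc_pos s w1 x eps + pv_trunc_pos s (\<lambda>v. - w2 v) y eps + (\<integral>\<^sup>+z. h z \<partial>lborel)"
  proof (rule pv_trunc_pos_balance[OF C eps(1)])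
    show "g z = 0" if "norm z \<le> eps" for z
      using that eps by (simp add: g_def dist_norm)
  qed (use outer nonneg in \<open>simp_all add: g_def h_def \<beta>_def\<close>)
  have "ennreal (m / D powr \<beta> * a) = ennreal (m / D powr \<beta>) * ennreal a"
    by (rule ennreal_mult) (use nonneg in auto)
  also have "\<dots> \<le> ennreal (m / D powr \<beta>) * emeasure lborel (A - ball y r)"
    using A_mass by (rule mult_left_mono) simp
  also have "\<dots> = (\<integral>\<^sup>+z. g z \<partial>lborel)"
    unfolding g_def using nonneg by (intro nn_integral_indicator_translate[symmetric]) auto
  finally have g_int: "ennreal (m / D powr \<beta> * a) \<le> (\<integral>\<^sup>+z. g z \<partial>lborel)" .
  have "(\<integral>\<^sup>+z. h z \<partial>lborel)
      = (\<integral>\<^sup>+z. ennreal \<Lambda> * ennreal (indicator (ball (0::'a) r) z * norm z powr (2 - \<beta>)) \<partial>lborel)"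
    by (intro nn_integral_cong) (use nonneg in \<open>simp add: h_def ennreal_mult\<close>)
  also have "\<dots> = ennreal \<Lambda> * (\<integral>\<^sup>+z. ennreal (indicator (ball (0::'a) r) z * norm z powr (2 - \<beta>)) \<partial>lborel)"
    by (rule nn_integral_cmult) measurable
  finally have h_int: "(\<integral>\<^sup>+z. h z \<partial>lborel) \<le> ennreal l"
    using near_mass by (simp add: \<beta>_def)
  have "pv_trunc_pos s w1 x eps < \<infinity>" "pv_trunc_pos s w2 y eps < \<infinity>"
    using pv_trunc_pos_finite[OF s eps(1) w(1) bounded(1)] pv_trunc_pos_finite[OF s eps(1) w(2) bounded(2)]
    by simp_all
  from ereal_diff_le_of_ennreal_balance[OF C this h_int \<open>0 \<le> l\<close> g_int _ balance]
  show ?thesis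
    using nonneg unfolding pv_trunc_eq_pos_diff[OF w(1)] pv_trunc_eq_pos_diff[OF w(2)] \<beta>_def by simp
qed

lemma visc_super_quadratic_test:
  assumes "visc_super s \<Omega> u f" "x \<in> \<Omega>" "0 < r" "ball x r \<subseteq> \<Omega>"
    and "\<phi> = (\<lambda>y. a + b * (norm (y - p))\<^sup>2 + c * (norm (y - q))\<^sup>2)"
    and "\<phi> x = u x" "\<And>y. y \<in> ball x r \<Longrightarrow> y \<noteq> x \<Longrightarrow> \<phi> y < u y"
  shows "frac_pv_ge s (\<lambda>y. if y \<in> ball x r then \<phi> y else u y) x (f x)"
proof -
  have "open (ball x r) \<and> x \<in> ball x r \<and> ball x r \<subseteq> \<Omega> \<and> C2_on (ball x r) \<phi> \<and> \<phi> x = u x \<and>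
      (\<forall>y\<in>ball x r - {x}. \<phi> y < u y) \<longrightarrow> frac_pv_ge s (\<lambda>y. if y \<in> ball x r then \<phi> y else u y) x (f x)"
    using assms(1,2) unfolding visc_super_def by blast
  then show ?thesis
    using assms C2_on_quadratic[of "ball x r" a b p c q] by auto
qed

lemma visc_sub_quadratic_test:
  assumes "visc_sub s \<Omega> u f" "x \<in> \<Omega>" "0 < r" "ball x r \<subseteq> \<Omega>"
    and "\<phi> = (\<lambda>y. a + b * (norm (y - p))\<^sup>2 + c * (norm (y - q))\<^sup>2)"
    and "\<phi> x = u x" "\<And>y. y \<in> ball x r \<Longrightarrow> y \<noteq> x \<Longrightarrow> u y < \<phi> y"
  shows "frac_pv_le s (\<lambda>y. if y \<in> ball x r then \<phi> y else u y) x (f x)"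
proof -
  have "open (ball x r) \<and> x \<in> ball x r \<and> ball x r \<subseteq> \<Omega> \<and> C2_on (ball x r) \<phi> \<and> \<phi> x = u x \<and>
      (\<forall>y\<in>ball x r - {x}. u y < \<phi> y) \<longrightarrow> frac_pv_le s (\<lambda>y. if y \<in> ball x r then \<phi> y else u y) x (f x)"
    using assms(1,2) unfolding visc_sub_def by blast
  then show ?thesis
    using assms C2_on_quadratic[of "ball x r" a b p c q] by auto
qed

lemma frac_pv_ge_le_of_eventually:
  assumes "frac_pv_ge s w x c" "\<forall>\<^sub>F eps in at_right 0. 2 * pv_trunc s w x eps \<le> ereal b"
  shows "c \<le> b"
proof -
  obtain L where L: "((\<lambda>eps. 2 * pv_trunc s w x eps) \<longlongrightarrow> L) (at_right 0)" "ereal c \<le> L"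
    using assms(1) unfolding frac_pv_ge_def by blast
  have "L \<le> ereal b"
    using tendsto_upperbound[OF L(1) assms(2)] by (simp add: trivial_limit_at_right_real)
  then show ?thesis
    using L(2) by (metis ereal_less_eq(3) order_trans)
qed

lemma frac_pv_compare_of_eventually:
  assumes "frac_pv_le s w1 x c1" "frac_pv_ge s w2 y c2" "0 \<le> C"
    and "\<forall>\<^sub>F eps in at_right 0. 2 * pv_trunc s w2 y eps \<le> ereal C * (2 * pv_trunc s w1 x eps) + ereal b"
  shows "c2 \<le> C * c1 + b"
proof -
  obtain L1 where L1: "((\<lambda>eps. 2 * pv_trunc s w1 x eps) \<longlongrightarrow> L1) (at_right 0)" "L1 \<le> ereal c1"
    using assms(1) unfolding frac_pv_le_def by blast
  obtain L2 where L2: "((\<lambda>eps. 2 * pv_trunc s w2 y eps) \<longlongrightarrow> L2) (at_right 0)" "ereal c2 \<le> L2"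
    using assms(2) unfolding frac_pv_ge_def by blast
  have "((\<lambda>eps. ereal C * (2 * pv_trunc s w1 x eps) + ereal b) \<longlongrightarrow> ereal C * L1 + ereal b) (at_right 0)"
    by (intro tendsto_add_ereal_general tendsto_cmult_ereal L1(1) tendsto_const) auto
  then have "L2 \<le> ereal C * L1 + ereal b"
    using L2(1) assms(4) by (intro tendsto_le[of "at_right 0"]) (simp_all add: trivial_limit_at_right_real)
  also have "\<dots> \<le> ereal C * ereal c1 + ereal b"
    using L1(2) assms(3) by (intro add_right_mono ereal_mult_left_mono) auto
  finally show ?thesis
    using L2(2) by (metis ereal_less_eq(3) order_trans plus_ereal.simps(1) times_ereal.simps(1))
qed

lemma small_ball_radius:
  fixes c :: "'a::euclidean_space"
  assumes s: "s < 1" and "0 < r0" "0 < \<mu>" "0 < l"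
  obtains r where "0 < r" "r < r0" "emeasure lborel (ball c r) \<le> ennreal \<mu>"
    "ennreal \<Lambda> * (\<integral>\<^sup>+z. ennreal (indicator (ball (0::'a) r) z * norm z powr (2 - (real DIM('a) + 2 * s))) \<partial>lborel)
       \<le> ennreal l"
proof -
  have "((\<lambda>r. ennreal \<Lambda> * (\<integral>\<^sup>+z. ennreal (indicator (ball (0::'a) r) z * norm z powr (2 - (real DIM('a) + 2 * s))) \<partial>lborel))
      \<longlongrightarrow> ennreal \<Lambda> * 0) (at_right 0)"
    using s by (intro ennreal_tendsto_cmult tendsto_nn_integral_ball_norm_powr) auto
  then have "\<forall>\<^sub>F r in at_right 0.
      ennreal \<Lambda> * (\<integral>\<^sup>+z. ennreal (indicator (ball (0::'a) r) z * norm z powr (2 - (real DIM('a) + 2 * s))) \<partial>lborel)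
        < ennreal l"
    using assms by (intro order_tendstoD(2)) auto
  moreover have "\<forall>\<^sub>F r in at_right 0. emeasure lborel (ball c r) < ennreal \<mu>"
    using assms by (intro order_tendstoD(2)[OF tendsto_emeasure_ball_at_right_0]) auto
  moreover have "\<forall>\<^sub>F r in at_right 0. 0 < r \<and> r < r0"
    using assms by (auto simp: eventually_at_right_field intro!: exI[of _ r0])
  ultimately have "\<forall>\<^sub>F r in at_right 0. 0 < r \<and> r < r0 \<and> emeasure lborel (ball c r) \<le> ennreal \<mu> \<and>
      ennreal \<Lambda> * (\<integral>\<^sup>+z. ennreal (indicator (ball (0::'a) r) z * norm z powr (2 - (real DIM('a) + 2 * s))) \<partial>lborel)
        \<le> ennreal l"
    by eventually_elim auto
  then show ?thesis
    using that eventually_happens[of _ "at_right (0::real)"] by (auto simp: trivial_limit_at_right_real)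
qed

section \<open>Strong minimum principle\<close>

lemma pv_trunc_touching_below_at_zero:
  fixes u :: "'a::euclidean_space \<Rightarrow> real"
  assumes s: "0 < s" and eps: "0 < eps" "eps < r"
    and u [measurable]: "u \<in> borel_measurable borel" and nonneg: "\<And>x. 0 \<le> u x" and "u x0 = 0"
    and A [measurable]: "A \<in> sets borel" and A_ball: "A \<subseteq> ball x0 D" and "0 < D"
    and m: "0 \<le> m" "\<And>y. y \<in> A \<Longrightarrow> m \<le> u y"
    and A_mass: "ennreal a \<le> emeasure lborel (A - ball x0 r)" and "0 \<le> a"
    and near_mass: "ennreal 1 * (\<integral>\<^sup>+z. ennreal (indicator (ball (0::'a) r) z * norm z powr (2 - (real DIM('a) + 2 * s))) \<partial>lborel)
      \<le> ennreal l" and "0 \<le> l"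
  shows "2 * pv_trunc s (\<lambda>y. if y \<in> ball x0 r then - (norm (y - x0))\<^sup>2 else u y) x0 eps
    \<le> ereal (2 * (l - m / D powr (real DIM('a) + 2 * s) * a))"
proof -
  define w where "w y = (if y \<in> ball x0 r then - (norm (y - x0))\<^sup>2 else u y)" for y
  have w_meas: "w \<in> borel_measurable borel"
    unfolding w_def by measurable
  have bound: "w x0 - w y \<le> r\<^sup>2" for y
  proof (cases "y \<in> ball x0 r")
    case True
    then have "(norm (y - x0))\<^sup>2 \<le> r\<^sup>2"
      by (auto simp: dist_norm norm_minus_commute intro!: power_mono)
    then show ?thesis
      using True eps by (simp add: w_def)
  next
    case False
    then have "w x0 - w y = - u y"
      using \<open>u x0 = 0\<close> by (simp add: w_def)
    then show ?thesis
      using nonneg[of y] zero_le_power2[of r] by linarith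
  qed
  have near: "- 1 * (norm z)\<^sup>2 \<le> 0 * (w x0 - w (x0 + z)) - (w x0 - w (x0 + z))" if "norm z < r" for z
    using that eps \<open>u x0 = 0\<close> by (simp add: w_def dist_norm)
  have far: "m * indicator A (x0 + z) \<le> 0 * (w x0 - w (x0 + z)) - (w x0 - w (x0 + z))" if "r \<le> norm z" for z
    using that eps \<open>u x0 = 0\<close> m(2)[of "x0 + z"] nonneg[of "x0 + z"] by (simp add: w_def dist_norm indicator_def)
  have "2 * pv_trunc s w x0 eps
      \<le> ereal 0 * (2 * pv_trunc s w x0 eps) + ereal (2 * (l - m / D powr (real DIM('a) + 2 * s) * a))"
    by (rule pv_trunc_comparison[OF s eps order_refl w_meas w_meas bound bound near far A A_ball A_mass near_mass])
      (use m \<open>0 < D\<close> \<open>0 \<le> a\<close> \<open>0 \<le> l\<close> in auto)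
  then show ?thesis
    by (simp add: w_def[abs_def] zero_ereal_def[symmetric])
qed

lemma visc_super_rhs_neg_at_zero:
  fixes u f :: "'a::euclidean_space \<Rightarrow> real"
  assumes s: "0 < s" "s < 1" and "open \<Omega>"
    and sup: "visc_super s \<Omega> u f" and nonneg: "\<And>x. 0 \<le> u x"
    and not_zero: "\<not> (AE x in lborel. u x = 0)"
    and x0: "x0 \<in> \<Omega>" "u x0 = 0"
  shows "f x0 < 0"
proof -
  have "L1_2s s u"
    using sup by (simp add: visc_super_def)
  then have u_meas [measurable]: "u \<in> borel_measurable borel"
    by (rule borel_measurable_L1_2s)
  obtain A m a D where A [measurable]: "A \<in> sets borel" and "0 < m" and m: "\<And>y. y \<in> A \<Longrightarrow> m \<le> u y"
    and a: "emeasure lborel A = ennreal a" "0 < a" and "0 < D" and A_ball: "A \<subseteq> ball x0 D"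
    using not_AE_zero_superlevel_set[OF u_meas nonneg not_zero, of "{x0}"] by (metis bounded_insert bounded_empty singletonI)
  define G where "G = m / D powr (real DIM('a) + 2 * s) * (a / 2)"
  have "0 < G"
    using \<open>0 < m\<close> \<open>0 < D\<close> a by (simp add: G_def)
  then have "0 < a / 2" "0 < G / 4"
    using a by simp_all
  obtain r0 where r0: "0 < r0" "ball x0 r0 \<subseteq> \<Omega>"
    using \<open>open \<Omega>\<close> x0(1) open_contains_ball by blast
  obtain r where r: "0 < r" "r < r0" "emeasure lborel (ball x0 r) \<le> ennreal (a / 2)"
    and near_mass: "ennreal 1 * (\<integral>\<^sup>+z. ennreal (indicator (ball (0::'a) r) z * norm z powr (2 - (real DIM('a) + 2 * s))) \<partial>lborel)
      \<le> ennreal (G / 4)"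
    by (rule small_ball_radius[OF s(2) r0(1) \<open>0 < a / 2\<close> \<open>0 < G / 4\<close>])
  have mass: "ennreal (a / 2) \<le> emeasure lborel (A - ball x0 r)"
    using emeasure_Diff_ge[of A lborel "ball x0 r" a "a / 2"] A a r(3) by simp
  have "frac_pv_ge s (\<lambda>y. if y \<in> ball x0 r then - (norm (y - x0))\<^sup>2 else u y) x0 (f x0)"
    using r r0 nonneg x0
    by (intro visc_super_quadratic_test[OF sup x0(1), where a=0 and b="-1" and p=x0 and c=0 and q=x0])
      (auto simp: fun_eq_iff intro: less_le_trans[of _ 0])
  moreover have "\<forall>\<^sub>F eps in at_right 0.
      2 * pv_trunc s (\<lambda>y. if y \<in> ball x0 r then - (norm (y - x0))\<^sup>2 else u y) x0 eps \<le> ereal (2 * (G / 4 - G))"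
    using pv_trunc_touching_below_at_zero[OF s(1) _ _ u_meas nonneg x0(2) A A_ball \<open>0 < D\<close> _ m mass _ near_mass]
      r(1) \<open>0 < m\<close> \<open>0 < G\<close> a(2)
    by (auto simp: eventually_at_right_field G_def intro!: exI[of _ r])
  ultimately have "f x0 \<le> 2 * (G / 4 - G)"
    by (rule frac_pv_ge_le_of_eventually)
  then show ?thesis
    using \<open>0 < G\<close> by simp
qed

section \<open>Comparison with the torsion function\<close>

lemma superlevel_set_margin:
  fixes v :: "'a::euclidean_space \<Rightarrow> real"
  assumes "open \<Omega>" "bounded \<Omega>" "continuous_on (closure \<Omega>) v"
    and v_out: "\<And>x. x \<notin> \<Omega> \<Longrightarrow> v x = 0" and "0 < \<theta>"
  obtains \<tau> where "0 < \<tau>" "\<And>x. \<theta> \<le> v x \<Longrightarrow> ball x \<tau> \<subseteq> \<Omega>"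
proof -
  define K where "K = closure \<Omega> \<inter> v -` {\<theta>..}"
  have "closed K"
    unfolding K_def using assms(3) by (simp add: continuous_closed_preimage)
  then have "compact K"
    using assms(2) by (simp add: K_def compact_eq_bounded_closed bounded_Int bounded_closure)
  moreover have "K \<inter> - \<Omega> = {}"
    using v_out \<open>0 < \<theta>\<close> by (force simp: K_def)
  ultimately obtain \<tau> where "0 < \<tau>" and \<tau>: "\<And>x y. x \<in> K \<Longrightarrow> y \<notin> \<Omega> \<Longrightarrow> \<tau> \<le> dist x y"
    using separate_compact_closed[of K "- \<Omega>"] assms(1) by (auto simp: closed_Compl)
  moreover have "x \<in> K" if "\<theta> \<le> v x" for x
    using that v_out[of x] \<open>0 < \<theta>\<close> closure_subset by (cases "x \<in> \<Omega>") (auto simp: K_def)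
  ultimately show ?thesis
    using that by force
qed

lemma doubling_variables_max:
  fixes v u :: "'a::euclidean_space \<Rightarrow> real"
  assumes \<Omega>: "open \<Omega>" "bounded \<Omega>"
    and cont: "continuous_on (closure \<Omega>) v" "continuous_on (closure \<Omega>) u"
    and v_out: "\<And>x. x \<notin> \<Omega> \<Longrightarrow> v x = 0" and u_nonneg: "\<And>x. 0 \<le> u x"
    and v_le: "\<And>x. v x \<le> M"
    and x1: "x1 \<in> \<Omega>" "u x1 < v x1"
  obtains xh yh \<delta> \<tau> P where "0 < \<delta>" "0 < \<tau>" "0 < P" "ball xh \<tau> \<subseteq> \<Omega>" "dist xh yh < \<tau> / 2"
    "v xh - u yh - (dist xh yh)\<^sup>2 / (2 * \<delta>) = P"
    "\<And>x y. dist x y < \<tau> \<Longrightarrow> v x - u y - (dist x y)\<^sup>2 / (2 * \<delta>) \<le> P"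
proof -
  define \<theta> where "\<theta> = v x1 - u x1"
  have "0 < \<theta>"
    using x1 by (simp add: \<theta>_def)
  obtain \<tau> where "0 < \<tau>" and margin: "\<And>x. \<theta> \<le> v x \<Longrightarrow> ball x \<tau> \<subseteq> \<Omega>"
    using superlevel_set_margin[OF \<Omega> cont(1) v_out \<open>0 < \<theta>\<close>] by blast
  define \<delta> where "\<delta> = \<tau>\<^sup>2 / (8 * (max M 0 + 1))"
  have "0 < \<delta>"
    using \<open>0 < \<tau>\<close> by (simp add: \<delta>_def)
  define \<Phi> where "\<Phi> p = v (fst p) - u (snd p) - (dist (fst p) (snd p))\<^sup>2 / (2 * \<delta>)" for p
  have "continuous_on (closure \<Omega> \<times> closure \<Omega>) \<Phi>"
    unfolding \<Phi>_def
    using \<open>0 < \<delta>\<close>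
    by (intro continuous_intros continuous_on_compose2[OF cont(1)] continuous_on_compose2[OF cont(2)])
      (auto simp: mem_Times_iff)
  moreover have "compact (closure \<Omega> \<times> closure \<Omega>)" "closure \<Omega> \<times> closure \<Omega> \<noteq> {}"
    using \<Omega>(2) x1(1) closure_subset by (auto simp: compact_Times compact_closure)
  ultimately obtain xh yh where xyh: "xh \<in> closure \<Omega>" "yh \<in> closure \<Omega>"
    and max: "\<And>x y. x \<in> closure \<Omega> \<Longrightarrow> y \<in> closure \<Omega> \<Longrightarrow> \<Phi> (x, y) \<le> \<Phi> (xh, yh)"
    using continuous_attains_sup[of "closure \<Omega> \<times> closure \<Omega>" \<Phi>] by (auto simp: mem_Times_iff)
  define P where "P = \<Phi> (xh, yh)"
  have "\<theta> \<le> P"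
    using max[of x1 x1] x1(1) closure_subset by (auto simp: P_def \<Phi>_def \<theta>_def)
  have P_eq: "v xh - u yh - (dist xh yh)\<^sup>2 / (2 * \<delta>) = P"
    by (simp add: P_def \<Phi>_def)
  \<comment> \<open>Not only on \<open>closure \<Omega> \<times> closure \<Omega>\<close>: where \<open>\<theta> \<le> v x\<close>, the ball around \<open>x\<close> stays in \<open>\<Omega>\<close>.\<close>
  have P_max: "v x - u y - (dist x y)\<^sup>2 / (2 * \<delta>) \<le> P" if "dist x y < \<tau>" for x y
  proof (cases "\<theta> \<le> v x")
    case True
    then have "x \<in> \<Omega>" "y \<in> \<Omega>"
      using margin[OF True] that \<open>0 < \<tau>\<close> by auto
    then show ?thesis
      using max[of x y] closure_subset by (auto simp: P_def \<Phi>_def)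
  next
    case False
    then show ?thesis
      using \<open>\<theta> \<le> P\<close> u_nonneg[of y] \<open>0 < \<delta>\<close> by (smt (verit) divide_nonneg_pos zero_le_power2)
  qed
  have "0 \<le> (dist xh yh)\<^sup>2 / (2 * \<delta>)"
    using \<open>0 < \<delta>\<close> by simp
  then have penalty: "(dist xh yh)\<^sup>2 / (2 * \<delta>) \<le> v xh" and "\<theta> \<le> v xh"
    using P_eq \<open>0 < \<theta>\<close> \<open>\<theta> \<le> P\<close> u_nonneg[of yh] by linarith+
  have ball: "ball xh \<tau> \<subseteq> \<Omega>"
    by (rule margin) fact
  have close: "dist xh yh < \<tau> / 2"
  proof -
    have "(dist xh yh)\<^sup>2 \<le> 2 * \<delta> * v xh"
      using penalty \<open>0 < \<delta>\<close> by (simp add: field_simps)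
    also have "\<dots> \<le> 2 * \<delta> * max M 0"
      using v_le[of xh] \<open>0 < \<delta>\<close> by (intro mult_left_mono) auto
    also have "\<dots> < (\<tau> / 2)\<^sup>2"
      using \<open>0 < \<tau>\<close> by (simp add: \<delta>_def field_simps power2_eq_square)
    finally have "(dist xh yh)\<^sup>2 < (\<tau> / 2)\<^sup>2" .
    then show ?thesis
      by (rule power_less_imp_less_base) (use \<open>0 < \<tau>\<close> in simp)
  qed
  have "0 < P"
    using \<open>0 < \<theta>\<close> \<open>\<theta> \<le> P\<close> by linarith
  show ?thesis
    by (rule that[OF \<open>0 < \<delta>\<close> \<open>0 < \<tau>\<close> \<open>0 < P\<close> ball close P_eq P_max])
qed

lemma doubling_test_functions:
  fixes u v :: "'a::real_inner \<Rightarrow> real"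
  assumes C: "0 < C" and \<delta>: "0 < \<delta>" and r: "r < \<tau> / 2" and close: "dist xh yh < \<tau> / 2"
    and P_eq: "C * v xh - u yh - (dist xh yh)\<^sup>2 / (2 * \<delta>) = P"
    and P_max: "\<And>x y. dist x y < \<tau> \<Longrightarrow> C * v x - u y - (dist x y)\<^sup>2 / (2 * \<delta>) \<le> P"
    and \<psi>1: "\<psi>1 = (\<lambda>y. (P + u yh) / C + 1 / (2 * \<delta> * C) * (norm (y - yh))\<^sup>2 + 1 * (norm (y - xh))\<^sup>2)"
    and \<psi>2: "\<psi>2 = (\<lambda>y. (C * v xh - P) + - (1 / (2 * \<delta>)) * (norm (y - xh))\<^sup>2 + - 1 * (norm (y - yh))\<^sup>2)"
  shows "\<psi>1 xh = v xh" "\<And>y. y \<in> ball xh r \<Longrightarrow> y \<noteq> xh \<Longrightarrow> v y < \<psi>1 y"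
    and "\<psi>2 yh = u yh" "\<And>y. y \<in> ball yh r \<Longrightarrow> y \<noteq> yh \<Longrightarrow> \<psi>2 y < u y"
proof -
  show "\<psi>1 xh = v xh"
    using P_eq C \<delta> by (simp add: \<psi>1 dist_norm field_simps)
  show "\<psi>2 yh = u yh"
    using P_eq by (simp add: \<psi>2 dist_norm norm_minus_commute)
  show "v y < \<psi>1 y" if "y \<in> ball xh r" "y \<noteq> xh" for y
  proof -
    have "dist y yh < \<tau>"
      using that r close dist_triangle[of y yh xh] by (simp add: dist_commute)
    then have "C * v y \<le> P + u yh + (norm (y - yh))\<^sup>2 / (2 * \<delta>)"
      using P_max[of y yh] by (simp add: dist_norm)
    then have "v y \<le> (P + u yh + (norm (y - yh))\<^sup>2 / (2 * \<delta>)) / C"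
      using C by (simp add: pos_le_divide_eq mult.commute)
    also have "\<dots> = (P + u yh) / C + 1 / (2 * \<delta> * C) * (norm (y - yh))\<^sup>2"
      using C \<delta> by (simp add: field_simps)
    finally have "v y \<le> (P + u yh) / C + 1 / (2 * \<delta> * C) * (norm (y - yh))\<^sup>2" .
    moreover have "0 < (norm (y - xh))\<^sup>2"
      using that(2) by simp
    moreover have "\<psi>1 y = (P + u yh) / C + 1 / (2 * \<delta> * C) * (norm (y - yh))\<^sup>2 + 1 * (norm (y - xh))\<^sup>2"
      by (simp add: \<psi>1)
    ultimately show ?thesis
      by linarith
  qed
  show "\<psi>2 y < u y" if "y \<in> ball yh r" "y \<noteq> yh" for y
  proof -
    have "dist xh y < \<tau>"
      using that r close dist_triangle[of xh y yh] by simp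
    then have "C * v xh - P - (norm (y - xh))\<^sup>2 / (2 * \<delta>) \<le> u y"
      using P_max[of xh y] by (simp add: dist_norm norm_minus_commute)
    moreover have "0 < (norm (y - yh))\<^sup>2"
      using that(2) by simp
    moreover have "\<psi>2 y = C * v xh - P - (norm (y - xh))\<^sup>2 / (2 * \<delta>) - (norm (y - yh))\<^sup>2"
      by (simp add: \<psi>2)
    ultimately show ?thesis
      by linarith
  qed
qed

lemma doubling_test_functions_second_difference:
  fixes u v :: "'a::real_inner \<Rightarrow> real"
  assumes C: "0 < C" and \<delta>: "0 < \<delta>"
    and \<psi>1: "\<psi>1 = (\<lambda>y. (P + u yh) / C + 1 / (2 * \<delta> * C) * (norm (y - yh))\<^sup>2 + 1 * (norm (y - xh))\<^sup>2)"
    and \<psi>2: "\<psi>2 = (\<lambda>y. (C * v xh - P) + - (1 / (2 * \<delta>)) * (norm (y - xh))\<^sup>2 + - 1 * (norm (y - yh))\<^sup>2)"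
  shows "C * (\<psi>1 xh - \<psi>1 (xh + z)) - (\<psi>2 yh - \<psi>2 (yh + z)) = - (1 / \<delta> + C + 1) * (norm z)\<^sup>2"
proof -
  define d where "d = xh - yh"
  have parallelogram: "(norm (z - d))\<^sup>2 = 2 * (norm d)\<^sup>2 + 2 * (norm z)\<^sup>2 - (norm (d + z))\<^sup>2"
    by (simp add: power2_norm_eq_inner inner_simps inner_commute algebra_simps)
  have shifts: "xh + z - yh = d + z" "yh + z - xh = z - d" "yh - xh = - d" "xh - yh = d"
    "xh + z - xh = z" "yh + z - yh = z" "xh - xh = 0" "yh - yh = 0"
    by (simp_all add: d_def algebra_simps)
  show ?thesis
    unfolding \<psi>1 \<psi>2 shifts parallelogram using C \<delta> by (simp add: field_simps)
qed

lemma pv_trunc_doubled_point_comparison: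
  fixes u v :: "'a::euclidean_space \<Rightarrow> real"
  assumes s: "0 < s" and eps: "0 < eps" "eps < r" and r: "r < \<tau> / 2"
    and [measurable]: "u \<in> borel_measurable borel" "v \<in> borel_measurable borel"
    and nonneg: "\<And>x. 0 \<le> u x" and v_bound: "\<And>x. \<bar>v x\<bar> \<le> M"
    and C: "0 < C" and \<delta>: "0 < \<delta>" and "0 \<le> P" and close: "dist xh yh < \<tau> / 2"
    and P_eq: "C * v xh - u yh - (dist xh yh)\<^sup>2 / (2 * \<delta>) = P"
    and P_max: "\<And>x y. dist x y < \<tau> \<Longrightarrow> C * v x - u y - (dist x y)\<^sup>2 / (2 * \<delta>) \<le> P"
    and \<psi>1: "\<psi>1 = (\<lambda>y. (P + u yh) / C + 1 / (2 * \<delta> * C) * (norm (y - yh))\<^sup>2 + 1 * (norm (y - xh))\<^sup>2)"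
    and \<psi>2: "\<psi>2 = (\<lambda>y. (C * v xh - P) + - (1 / (2 * \<delta>)) * (norm (y - xh))\<^sup>2 + - 1 * (norm (y - yh))\<^sup>2)"
    and A [measurable]: "A \<in> sets borel" and A_ball: "A \<subseteq> ball yh D" and "0 < D"
    and gap: "\<And>x y. y \<in> A \<Longrightarrow> C * v x + m \<le> u y" and "0 \<le> m"
    and A_mass: "ennreal a \<le> emeasure lborel (A - ball yh r)" and "0 \<le> a"
    and near_mass: "ennreal (1 / \<delta> + C + 1) *
      (\<integral>\<^sup>+z. ennreal (indicator (ball (0::'a) r) z * norm z powr (2 - (real DIM('a) + 2 * s))) \<partial>lborel)
        \<le> ennreal l" and "0 \<le> l"
  shows "2 * pv_trunc s (\<lambda>y. if y \<in> ball yh r then \<psi>2 y else u y) yh eps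
    \<le> ereal C * (2 * pv_trunc s (\<lambda>y. if y \<in> ball xh r then \<psi>1 y else v y) xh eps)
      + ereal (2 * (l - m / D powr (real DIM('a) + 2 * s) * a))"
proof -
  note \<psi> = doubling_test_functions[OF C \<delta> r close P_eq P_max \<psi>1 \<psi>2]
  define w1 where "w1 = (\<lambda>y. if y \<in> ball xh r then \<psi>1 y else v y)"
  define w2 where "w2 = (\<lambda>y. if y \<in> ball yh r then \<psi>2 y else u y)"
  have w_meas: "w1 \<in> borel_measurable borel" "w2 \<in> borel_measurable borel"
    unfolding w1_def w2_def \<psi>1 \<psi>2 by measurable
  have "dist xh yh < \<tau>"
    using close zero_le_dist[of xh yh] by linarith
  have near: "- (1 / \<delta> + C + 1) * (norm z)\<^sup>2 \<le> C * (w1 xh - w1 (xh + z)) - (w2 yh - w2 (yh + z))"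
    if "norm z < r" for z
    using that eps doubling_test_functions_second_difference[where u=u and v=v and xh=xh and yh=yh, OF C \<delta> \<psi>1 \<psi>2, of z]
    by (simp add: w1_def w2_def dist_norm)
  have far: "m * indicator A (yh + z) \<le> C * (w1 xh - w1 (xh + z)) - (w2 yh - w2 (yh + z))" if "r \<le> norm z" for z
  proof -
    have "C * (w1 xh - w1 (xh + z)) - (w2 yh - w2 (yh + z))
        = P + (dist xh yh)\<^sup>2 / (2 * \<delta>) - (C * v (xh + z) - u (yh + z))"
      using that eps \<psi>(1,3) P_eq by (simp add: w1_def w2_def dist_norm algebra_simps)
    moreover have "C * v (xh + z) - u (yh + z) - (dist xh yh)\<^sup>2 / (2 * \<delta>) \<le> P"
      using P_max[of "xh + z" "yh + z"] \<open>dist xh yh < \<tau>\<close> by (simp add: dist_norm)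
    moreover have "C * v (xh + z) - u (yh + z) \<le> - m" if "yh + z \<in> A"
      using gap[OF that, of "xh + z"] by simp
    moreover have "0 \<le> (dist xh yh)\<^sup>2 / (2 * \<delta>)"
      using \<delta> by simp
    ultimately show ?thesis
      using \<open>0 \<le> P\<close> by (cases "yh + z \<in> A") auto
  qed
  have bound1: "w1 xh - w1 y \<le> 2 * M" for y
    using \<psi>(1) \<psi>(2)[of y] v_bound[of xh] v_bound[of y] eps
    by (cases "y = xh") (auto simp: w1_def abs_le_iff)
  have bound2: "w2 yh - w2 y \<le> u yh + \<tau>\<^sup>2 / (2 * \<delta>) + \<tau>\<^sup>2" for y
  proof (cases "y \<in> ball yh r")
    case True
    then have "dist xh y < \<tau>" "dist yh y < \<tau>"
      using eps r close dist_triangle[of xh y yh] by auto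
    then have "(norm (y - xh))\<^sup>2 / (2 * \<delta>) \<le> \<tau>\<^sup>2 / (2 * \<delta>)" "(norm (y - yh))\<^sup>2 \<le> \<tau>\<^sup>2"
      using \<delta> by (auto simp: dist_norm norm_minus_commute intro!: divide_right_mono power_mono)
    moreover have "0 \<le> C * v xh - P"
      using P_eq nonneg[of yh] \<delta> by (smt (verit) divide_nonneg_pos zero_le_power2)
    moreover have "w2 yh - w2 y = u yh - \<psi>2 y"
      using True eps \<psi>(3) by (simp add: w2_def)
    moreover have "\<psi>2 y = (C * v xh - P) - (norm (y - xh))\<^sup>2 / (2 * \<delta>) - (norm (y - yh))\<^sup>2"
      by (simp add: \<psi>2)
    ultimately show ?thesis
      by linarith
  next
    case False
    then have "w2 yh - w2 y = u yh - u y"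
      using eps \<psi>(3) by (simp add: w2_def)
    moreover have "0 \<le> \<tau>\<^sup>2 / (2 * \<delta>)"
      using \<delta> by simp
    ultimately show ?thesis
      using nonneg[of y] zero_le_power2[of \<tau>] by linarith
  qed
  show ?thesis
    using pv_trunc_comparison[OF s eps less_imp_le[OF C] w_meas bound1 bound2 near far A A_ball A_mass near_mass]
      \<delta> C \<open>0 \<le> m\<close> \<open>0 < D\<close> \<open>0 \<le> a\<close> \<open>0 \<le> l\<close> unfolding w1_def w2_def by simp
qed

lemma visc_doubled_point_estimate:
  fixes u v f :: "'a::euclidean_space \<Rightarrow> real"
  assumes s: "0 < s" "s < 1"
    and sup: "visc_super s \<Omega> u f" and sub: "visc_sub s \<Omega> v (\<lambda>_. 1)"
    and nonneg: "\<And>x. 0 \<le> u x" and v_bound: "\<And>x. \<bar>v x\<bar> \<le> M"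
    and C: "0 < C" and \<delta>: "0 < \<delta>" and "0 \<le> P"
    and ball: "ball xh \<tau> \<subseteq> \<Omega>" and close: "dist xh yh < \<tau> / 2"
    and P_eq: "C * v xh - u yh - (dist xh yh)\<^sup>2 / (2 * \<delta>) = P"
    and P_max: "\<And>x y. dist x y < \<tau> \<Longrightarrow> C * v x - u y - (dist x y)\<^sup>2 / (2 * \<delta>) \<le> P"
    and A: "A \<in> sets borel" and A_ball: "A \<subseteq> ball yh D" and "0 < D"
    and a: "emeasure lborel A = ennreal a" "0 < a" and "0 < m"
    and gap: "\<And>x y. y \<in> A \<Longrightarrow> C * v x + m \<le> u y"
  shows "f yh \<le> C - m * a / (2 * D powr (real DIM('a) + 2 * s))"
proof -
  define G where "G = m / D powr (real DIM('a) + 2 * s) * (a / 2)"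
  have "L1_2s s u" "L1_2s s v"
    using sup sub by (simp_all add: visc_super_def visc_sub_def)
  then have meas: "u \<in> borel_measurable borel" "v \<in> borel_measurable borel"
    by (simp_all add: borel_measurable_L1_2s)
  have "0 < G" "0 < a / 2" "0 < G / 2"
    using \<open>0 < m\<close> \<open>0 < D\<close> a by (simp_all add: G_def)
  have "0 < \<tau> / 2"
    using close zero_le_dist[of xh yh] by linarith
  obtain r where r: "0 < r" "r < \<tau> / 2" "emeasure lborel (ball yh r) \<le> ennreal (a / 2)"
    and near_mass: "ennreal (1 / \<delta> + C + 1) *
      (\<integral>\<^sup>+z. ennreal (indicator (ball (0::'a) r) z * norm z powr (2 - (real DIM('a) + 2 * s))) \<partial>lborel)
        \<le> ennreal (G / 2)"
    by (rule small_ball_radius[OF s(2) \<open>0 < \<tau> / 2\<close> \<open>0 < a / 2\<close> \<open>0 < G / 2\<close>])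
  have "ball yh r \<subseteq> ball xh \<tau>"
  proof
    fix t assume "t \<in> ball yh r"
    then show "t \<in> ball xh \<tau>"
      using dist_triangle[of xh t yh] close r(2) by simp
  qed
  moreover have "ball xh r \<subseteq> ball xh \<tau>"
    using r by (intro subset_ball) linarith
  ultimately have balls: "ball xh r \<subseteq> \<Omega>" "ball yh r \<subseteq> \<Omega>"
    using ball by blast+
  then have centres: "xh \<in> \<Omega>" "yh \<in> \<Omega>"
    using r(1) centre_in_ball by blast+
  \<comment> \<open>Freeze one variable in the penalized maximum; the extra squares make the contact strict.\<close>
  define \<psi>1 where "\<psi>1 = (\<lambda>y. (P + u yh) / C + 1 / (2 * \<delta> * C) * (norm (y - yh))\<^sup>2 + 1 * (norm (y - xh))\<^sup>2)"
  define \<psi>2 where "\<psi>2 = (\<lambda>y. (C * v xh - P) + - (1 / (2 * \<delta>)) * (norm (y - xh))\<^sup>2 + - 1 * (norm (y - yh))\<^sup>2)"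
  note \<psi> = doubling_test_functions[OF C \<delta> r(2) close P_eq P_max \<psi>1_def \<psi>2_def]
  have mass: "ennreal (a / 2) \<le> emeasure lborel (A - ball yh r)"
    using emeasure_Diff_ge[of A lborel "ball yh r" a "a / 2"] A a r(3) by simp
  have "frac_pv_le s (\<lambda>y. if y \<in> ball xh r then \<psi>1 y else v y) xh 1"
    by (rule visc_sub_quadratic_test[OF sub centres(1) r(1) balls(1) \<psi>1_def \<psi>(1,2)])
  moreover have "frac_pv_ge s (\<lambda>y. if y \<in> ball yh r then \<psi>2 y else u y) yh (f yh)"
    by (rule visc_super_quadratic_test[OF sup centres(2) r(1) balls(2) \<psi>2_def \<psi>(3,4)])
  moreover have "\<forall>\<^sub>F eps in at_right 0. 2 * pv_trunc s (\<lambda>y. if y \<in> ball yh r then \<psi>2 y else u y) yh eps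
      \<le> ereal C * (2 * pv_trunc s (\<lambda>y. if y \<in> ball xh r then \<psi>1 y else v y) xh eps)
        + ereal (2 * (G / 2 - m / D powr (real DIM('a) + 2 * s) * (a / 2)))"
    using pv_trunc_doubled_point_comparison[OF s(1) _ _ r(2) meas nonneg v_bound C \<delta> \<open>0 \<le> P\<close> close
        P_eq P_max \<psi>1_def \<psi>2_def A A_ball \<open>0 < D\<close> gap _ mass _ near_mass] \<open>0 < m\<close> \<open>0 < G\<close> a(2) r(1)
    by (auto simp: eventually_at_right_field intro!: exI[of _ r])
  ultimately have "f yh \<le> C * 1 + 2 * (G / 2 - m / D powr (real DIM('a) + 2 * s) * (a / 2))"
    using C by (intro frac_pv_compare_of_eventually) auto
  then show ?thesis
    by (simp add: G_def ac_simps)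
qed

lemma bounded_if_continuous_on_closure_zero_outside:
  fixes v :: "'a::euclidean_space \<Rightarrow> real"
  assumes "bounded \<Omega>" "continuous_on (closure \<Omega>) v" "\<And>x. x \<notin> \<Omega> \<Longrightarrow> v x = 0"
  obtains M where "0 \<le> M" "\<And>x. \<bar>v x\<bar> \<le> M"
proof -
  have "compact (v ` closure \<Omega>)"
    using assms(1,2) by (intro compact_continuous_image) (simp_all add: compact_closure)
  then obtain M where M: "\<forall>x\<in>closure \<Omega>. \<bar>v x\<bar> \<le> M"
    by (auto dest!: compact_imp_bounded simp: bounded_real)
  show ?thesis
  proof
    show "\<bar>v x\<bar> \<le> max M 0" for x
      using M assms(3)[of x] closure_subset[of \<Omega>] by (cases "x \<in> \<Omega>") force+
  qed simp
qed

lemma visc_super_ge_torsion_multiple: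
  fixes u v f :: "'a::euclidean_space \<Rightarrow> real"
  assumes s: "0 < s" "s < 1" and \<Omega>: "open \<Omega>" "bounded \<Omega>"
    and sup: "visc_super s \<Omega> u f" and u_cont: "continuous_on (closure \<Omega>) u" and nonneg: "\<And>x. 0 \<le> u x"
    and not_zero: "\<not> (AE x in lborel. u x = 0)"
    and sub: "visc_sub s \<Omega> v (\<lambda>_. 1)" and v_cont: "continuous_on (closure \<Omega>) v"
    and v_out: "\<And>x. x \<notin> \<Omega> \<Longrightarrow> v x = 0"
  obtains \<kappa> where "0 < \<kappa>"
    "\<And>C. 0 < C \<Longrightarrow> C \<le> \<kappa> \<Longrightarrow> (\<And>x. C * v x \<le> \<kappa>) \<Longrightarrow>
      (\<And>x y. x \<in> \<Omega> \<Longrightarrow> u x \<le> C * v y \<Longrightarrow> - \<kappa> \<le> f x) \<Longrightarrow> \<forall>x\<in>\<Omega>. C * v x \<le> u x"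
proof -
  have "L1_2s s u"
    using sup by (simp add: visc_super_def)
  then have u_meas: "u \<in> borel_measurable borel"
    by (rule borel_measurable_L1_2s)
  obtain A m a D where A: "A \<in> sets borel" and "0 < m" and m: "\<And>y. y \<in> A \<Longrightarrow> m \<le> u y"
    and a: "emeasure lborel A = ennreal a" "0 < a" and "0 < D" and A_ball: "\<And>y. y \<in> \<Omega> \<Longrightarrow> A \<subseteq> ball y D"
    using not_AE_zero_superlevel_set[OF u_meas nonneg not_zero \<Omega>(2)] by metis
  obtain M where M: "\<And>x. \<bar>v x\<bar> \<le> M"
    using bounded_if_continuous_on_closure_zero_outside[OF \<Omega>(2) v_cont v_out] by blast
  define G where "G = (m / 2) * a / (2 * D powr (real DIM('a) + 2 * s))"
  have "0 < G"
    using \<open>0 < m\<close> a(2) \<open>0 < D\<close> by (simp add: G_def)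
  \<comment> \<open>\<open>\<kappa> \<le> m / 2\<close> keeps \<open>u - C v \<ge> m / 2\<close> on \<open>A\<close>; \<open>\<kappa> \<le> G / 3\<close> contradicts \<open>f yh \<le> C - G\<close>.\<close>
  show ?thesis
  proof
    show "0 < min (m / 2) (G / 3)"
      using \<open>0 < m\<close> \<open>0 < G\<close> by simp
    fix C assume C: "0 < C" "C \<le> min (m / 2) (G / 3)" and Cv: "\<And>x. C * v x \<le> min (m / 2) (G / 3)"
      and f: "\<And>x y. x \<in> \<Omega> \<Longrightarrow> u x \<le> C * v y \<Longrightarrow> - min (m / 2) (G / 3) \<le> f x"
    show "\<forall>x\<in>\<Omega>. C * v x \<le> u x"
    proof (rule ccontr)
      assume "\<not> (\<forall>x\<in>\<Omega>. C * v x \<le> u x)"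
      then obtain x1 where x1: "x1 \<in> \<Omega>" "u x1 < C * v x1"
        by (auto simp: not_le)
      have Cv_cont: "continuous_on (closure \<Omega>) (\<lambda>x. C * v x)"
        using v_cont by (intro continuous_intros)
      have Cv_out: "\<And>x. x \<notin> \<Omega> \<Longrightarrow> C * v x = 0"
        by (simp add: v_out)
      obtain xh yh \<delta> \<tau> P where "0 < \<delta>" "0 < \<tau>" "0 < P" "ball xh \<tau> \<subseteq> \<Omega>" "dist xh yh < \<tau> / 2"
        and P_eq: "C * v xh - u yh - (dist xh yh)\<^sup>2 / (2 * \<delta>) = P"
        and P_max: "\<And>x y. dist x y < \<tau> \<Longrightarrow> C * v x - u y - (dist x y)\<^sup>2 / (2 * \<delta>) \<le> P"
        using doubling_variables_max[where v="\<lambda>x. C * v x" and u=u, OF \<Omega> Cv_cont u_cont Cv_out nonneg Cv x1]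
        by metis
      then have "yh \<in> \<Omega>"
        by (auto simp: subset_iff)
      have "f yh \<le> C - m / 2 * a / (2 * D powr (real DIM('a) + 2 * s))"
      proof (rule visc_doubled_point_estimate[OF s sup sub nonneg M C(1) \<open>0 < \<delta>\<close> _ \<open>ball xh \<tau> \<subseteq> \<Omega>\<close>
            \<open>dist xh yh < \<tau> / 2\<close> P_eq P_max A A_ball[OF \<open>yh \<in> \<Omega>\<close>] \<open>0 < D\<close> a])
        show "C * v x + m / 2 \<le> u y" if "y \<in> A" for x y
          using Cv[of x] m[OF that] by linarith
      qed (use \<open>0 < P\<close> \<open>0 < m\<close> in auto)
      moreover have "u yh \<le> C * v xh"
        using P_eq \<open>0 < P\<close> \<open>0 < \<delta>\<close> by (smt (verit) divide_nonneg_pos zero_le_power2)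
      then have "- (G / 3) \<le> f yh"
        using f[OF \<open>yh \<in> \<Omega>\<close>] min.cobounded2[of "m / 2" "G / 3"] by (meson order_trans neg_le_iff_le)
      ultimately show False
        using C \<open>0 < G\<close> by (simp add: G_def)
    qed
  qed
qed

lemma visc_super_ge_torsion:
  fixes u v :: "'a::euclidean_space \<Rightarrow> real" and g :: "real \<Rightarrow> real"
  assumes s: "0 < s" "s < 1" and \<Omega>: "open \<Omega>" "bounded \<Omega>"
    and sup: "visc_super s \<Omega> u (\<lambda>x. g (u x))" and u_cont: "continuous_on (closure \<Omega>) u"
    and nonneg: "\<And>x. 0 \<le> u x" and not_zero: "\<not> (AE x in lborel. u x = 0)"
    and g: "continuous_on {0..} g" "g 0 = 0"
    and sub: "visc_sub s \<Omega> v (\<lambda>_. 1)" and v_cont: "continuous_on (closure \<Omega>) v"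
    and v_out: "\<And>x. x \<notin> \<Omega> \<Longrightarrow> v x = 0"
  obtains C where "0 < C" "\<And>x. x \<in> \<Omega> \<Longrightarrow> C * v x \<le> u x"
proof -
  obtain \<kappa> where "0 < \<kappa>" and \<kappa>: "\<And>C. 0 < C \<Longrightarrow> C \<le> \<kappa> \<Longrightarrow> (\<And>x. C * v x \<le> \<kappa>) \<Longrightarrow>
      (\<And>x y. x \<in> \<Omega> \<Longrightarrow> u x \<le> C * v y \<Longrightarrow> - \<kappa> \<le> g (u x)) \<Longrightarrow> \<forall>x\<in>\<Omega>. C * v x \<le> u x"
    using visc_super_ge_torsion_multiple[OF s \<Omega> sup u_cont nonneg not_zero sub v_cont v_out] by metis
  obtain M where "0 \<le> M" and M: "\<And>x. \<bar>v x\<bar> \<le> M"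
    using bounded_if_continuous_on_closure_zero_outside[OF \<Omega>(2) v_cont v_out] by blast
  obtain \<eta> where "0 < \<eta>" and \<eta>': "\<forall>t\<in>{0..}. dist t 0 < \<eta> \<longrightarrow> dist (g t) (g 0) < \<kappa>"
    using g(1) \<open>0 < \<kappa>\<close> unfolding continuous_on_iff by (meson atLeast_iff order_refl)
  have \<eta>: "- \<kappa> < g t" if "0 \<le> t" "t < \<eta>" for t
    using \<eta>'[rule_format, of t] that g(2) by (simp add: dist_real_def)
  define C where "C = min \<kappa> \<eta> / (M + 1)"
  have "0 < C"
    using \<open>0 < \<kappa>\<close> \<open>0 < \<eta>\<close> \<open>0 \<le> M\<close> by (simp add: C_def)
  have "C \<le> min \<kappa> \<eta>"
    using divide_left_mono[of 1 "M + 1" "min \<kappa> \<eta>"] \<open>0 < \<kappa>\<close> \<open>0 < \<eta>\<close> \<open>0 \<le> M\<close> by (simp add: C_def)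
  have Cv: "C * v x < min \<kappa> \<eta>" for x
  proof -
    have "C * v x \<le> C * M"
      using M[of x] \<open>0 < C\<close> by (intro mult_left_mono) (auto simp: abs_le_iff)
    also have "\<dots> = min \<kappa> \<eta> * (M / (M + 1))"
      by (simp add: C_def)
    also have "\<dots> < min \<kappa> \<eta> * 1"
      using \<open>0 < \<kappa>\<close> \<open>0 < \<eta>\<close> \<open>0 \<le> M\<close> by (intro mult_strict_left_mono) auto
    finally show ?thesis
      by simp
  qed
  have "\<forall>x\<in>\<Omega>. C * v x \<le> u x"
  proof (rule \<kappa>[OF \<open>0 < C\<close>])
    show "- \<kappa> \<le> g (u x)" if "u x \<le> C * v y" for x y
      using \<eta>[OF nonneg, of x] Cv[of y] that by simp
  qed (use \<open>C \<le> min \<kappa> \<eta>\<close> Cv less_imp_le in auto)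
  then show ?thesis
    using that \<open>0 < C\<close> by blast
qed

theorem corollary1p3:
  fixes s :: real and \<Omega> :: "'a::euclidean_space set"
    and u ut :: "'a \<Rightarrow> real" and g :: "real \<Rightarrow> real"
  assumes "0 < s" "s < 1"
    and "open \<Omega>" "bounded \<Omega>"
    and "L1_2s s u" "continuous_on (closure \<Omega>) u" "\<forall>x. 0 \<le> u x"
    and "continuous_on {0..} g" "g 0 = 0"
    and "visc_super s \<Omega> u (\<lambda>x. g (u x))"
    and "torsion_function s \<Omega> ut"
  shows "(AE x in lborel. u x = 0) \<or>
         ((\<forall>x\<in>\<Omega>. 0 < u x) \<and> (\<exists>C>0. \<forall>x\<in>\<Omega>. C * ut x \<le> u x))"
proof (cases "AE x in lborel. u x = 0")
  case True
  then show ?thesis by simp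
next
  case not_zero: False
  note s = assms(1,2) and \<Omega> = assms(3,4) and sup = assms(10)
  have nonneg: "\<And>x. 0 \<le> u x"
    using assms(7) by simp
  have pos: "0 < u x" if "x \<in> \<Omega>" for x
    using visc_super_rhs_neg_at_zero[OF s \<Omega>(1) sup nonneg not_zero that] nonneg[of x] assms(9)
    by (cases "u x = 0") auto
  have ut: "visc_sub s \<Omega> ut (\<lambda>_. 1)" "continuous_on (closure \<Omega>) ut" "\<And>x. x \<notin> \<Omega> \<Longrightarrow> ut x = 0"
    using assms(11) by (simp_all add: torsion_function_def visc_sol_def)
  obtain C where "0 < C" "\<And>x. x \<in> \<Omega> \<Longrightarrow> C * ut x \<le> u x"
    using visc_super_ge_torsion[OF s \<Omega> sup assms(6) nonneg not_zero assms(8,9) ut] by metis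
  then show ?thesis
    using pos by blast
qed

end
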